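(* Let $K\in\hat{\mathcal K}$ and $L=\mathcal A(K)K$. Then $$|L\cap\{y=0,x\ge0,z\ge0\}|=|L\cap\{y=0,x\ge0,z\le0\}|,\qquad |L\cap\{z=0,x\ge0,y\ge0\}|=|L\cap\{z=0,x\le0,y\ge0\}|,$$ $$|\Delta_1(L)|+|\Delta_2(L)|=|\Delta_3(L)|+|\Delta_4(L)|.$$
   Context: $\hat{\mathcal K}$ is the set of centrally symmetric convex bodies in $\mathbb{R}^3$ with $C^\infty$ boundary that are strongly convex ($\frac12\mu_K^2$ has positive definite Hessian on the unit sphere, $\mu_K$ the Minkowski gauge). $\rho_K(x)=\max\{\lambda\ge0:\lambda x\in K\}$, $P(\alpha,\beta)=(\cos\alpha,\sin\alpha\cos\beta,\sin\alpha\sin\beta)$. $\Theta(K)\in(0,\pi)$ is the unique number with $\int_0^{\Theta}\!d\beta\int_0^\pi\rho_K^3(P(\alpha,\beta))\sin\alpha\,d\alpha=\int_{\Theta}^{\pi}\!d\beta\int_0^\pi\rho_K^3(P(\alpha,\beta))\sin\alpha\,d\alpha$. $\Phi(K)\in(0,\pi)$ is the unique number with $\int_0^{\Phi}\rho_K^2(P(\alpha,0))d\alpha=\int_{\Phi}^\pi\rho_K^2(P(\alpha,0))d\alpha$, and $\Psi(K)\in(0,\pi)$ the unique number with $\int_0^{\Psi}\rho_K^2(P(\alpha,\Theta(K)))d\alpha=\int_{\Psi}^\pi\rho_K^2(P(\alpha,\Theta(K)))d\alpha$. $\mathcal A(K)=\begin{pmatrix}1&\cot\Phi(K)&\frac{1}{\sin\Theta(K)\tan\Psi(K)}\\0&1&\cot\Theta(K)\\0&0&1\end{pmatrix}^{-1}$.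 $\Delta_1(L)=L\cap\{x\ge0,y\ge0,z\ge0\}$, $\Delta_2(L)=L\cap\{x\le0,y\ge0,z\ge0\}$, $\Delta_3(L)=L\cap\{x\le0,y\le0,z\ge0\}$, $\Delta_4(L)=L\cap\{x\ge0,y\le0,z\ge0\}$; their measures are volumes, the planar sets' measures are areas. *)

theory Defs
  imports "HOL-Analysis.Analysis"
begin

text \<open>Coordinates of a point p :: real^3 are p$1 = x, p$2 = y, p$3 = z.\<close>

definition convex_body3 :: "(real^3) set \<Rightarrow> bool" where
  "convex_body3 K \<longleftrightarrow> compact K \<and> convex K \<and> interior K \<noteq> {}"

definition centrally_symmetric :: "(real^3) set \<Rightarrow> bool" where
  "centrally_symmetric K \<longleftrightarrow> (\<forall>x\<in>K. - x \<in> K)"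

definition gauge :: "(real^3) set \<Rightarrow> real^3 \<Rightarrow> real" where
  "gauge K x = Inf {t. t > 0 \<and> x \<in> (\<lambda>p. t *\<^sub>R p) ` K}"

definition radial :: "(real^3) set \<Rightarrow> real^3 \<Rightarrow> real" where
  "radial K x = Sup {t. t \<ge> 0 \<and> t *\<^sub>R x \<in> K}"

fun iter_dd :: "(real^3) list \<Rightarrow> (real^3 \<Rightarrow> real) \<Rightarrow> (real^3) set \<Rightarrow> bool" where
  "iter_dd [] f S = continuous_on S f"
| "iter_dd (v # vs) f S =
     ((\<forall>x\<in>S. f differentiable (at x)) \<and> iter_dd vs (\<lambda>x. frechet_derivative f (at x) v) S)"

definition smooth_on3 :: "(real^3 \<Rightarrow> real) \<Rightarrow> (real^3) set \<Rightarrow> bool" where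
  "smooth_on3 f S \<longleftrightarrow> (\<forall>vs. iter_dd vs f S)"

definition hess_form :: "(real^3 \<Rightarrow> real) \<Rightarrow> real^3 \<Rightarrow> real^3 \<Rightarrow> real" where
  "hess_form f u v = frechet_derivative (\<lambda>x. frechet_derivative f (at x) v) (at u) v"

text \<open>The class \<open>\<hat>K\<close>: centrally symmetric convex bodies with C-infinity boundary
  (gauge smooth away from the origin) which are strongly convex.\<close>
definition Khat :: "(real^3) set set" where
  "Khat = {K. convex_body3 K \<and> centrally_symmetric K
              \<and> smooth_on3 (gauge K) (- {0})
              \<and> (\<forall>u. norm u = 1 \<longrightarrow>
                    (\<forall>v. v \<noteq> 0 \<longrightarrow> hess_form (\<lambda>x. (gauge K x)\<^sup>2 / 2) u v > 0))}"

definition Pt :: "real \<Rightarrow> real \<Rightarrow> real^3" where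
  "Pt \<alpha> \<beta> = vector [cos \<alpha>, sin \<alpha> * cos \<beta>, sin \<alpha> * sin \<beta>]"

definition Theta :: "(real^3) set \<Rightarrow> real" where
  "Theta K = (THE \<theta>. 0 < \<theta> \<and> \<theta> < pi \<and>
     integral {0..\<theta>} (\<lambda>\<beta>. integral {0..pi} (\<lambda>\<alpha>. (radial K (Pt \<alpha> \<beta>)) ^ 3 * sin \<alpha>))
   = integral {\<theta>..pi} (\<lambda>\<beta>. integral {0..pi} (\<lambda>\<alpha>. (radial K (Pt \<alpha> \<beta>)) ^ 3 * sin \<alpha>)))"

definition Phi :: "(real^3) set \<Rightarrow> real" where
  "Phi K = (THE \<phi>. 0 < \<phi> \<and> \<phi> < pi \<and>
     integral {0..\<phi>} (\<lambda>\<alpha>. (radial K (Pt \<alpha> 0))\<^sup>2)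
   = integral {\<phi>..pi} (\<lambda>\<alpha>. (radial K (Pt \<alpha> 0))\<^sup>2))"

definition Psi :: "(real^3) set \<Rightarrow> real" where
  "Psi K = (THE \<psi>. 0 < \<psi> \<and> \<psi> < pi \<and>
     integral {0..\<psi>} (\<lambda>\<alpha>. (radial K (Pt \<alpha> (Theta K)))\<^sup>2)
   = integral {\<psi>..pi} (\<lambda>\<alpha>. (radial K (Pt \<alpha> (Theta K)))\<^sup>2))"

definition Amat :: "(real^3) set \<Rightarrow> real^3^3" where
  "Amat K = matrix_inv
     (vector [vector [1, cot (Phi K), 1 / (sin (Theta K) * tan (Psi K))],
              vector [0, 1, cot (Theta K)],
              vector [0, 0, 1]] :: real^3^3)"

definition Delta1 :: "(real^3) set \<Rightarrow> (real^3) set" where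
  "Delta1 L = L \<inter> {p. p$1 \<ge> 0 \<and> p$2 \<ge> 0 \<and> p$3 \<ge> 0}"
definition Delta2 :: "(real^3) set \<Rightarrow> (real^3) set" where
  "Delta2 L = L \<inter> {p. p$1 \<le> 0 \<and> p$2 \<ge> 0 \<and> p$3 \<ge> 0}"
definition Delta3 :: "(real^3) set \<Rightarrow> (real^3) set" where
  "Delta3 L = L \<inter> {p. p$1 \<le> 0 \<and> p$2 \<le> 0 \<and> p$3 \<ge> 0}"
definition Delta4 :: "(real^3) set \<Rightarrow> (real^3) set" where
  "Delta4 L = L \<inter> {p. p$1 \<ge> 0 \<and> p$2 \<le> 0 \<and> p$3 \<ge> 0}"

definition area_y0 :: "(real^3) set \<Rightarrow> real" where
  "area_y0 S = measure lebesgue {q :: real^2. (vector [q$1, 0, q$2] :: real^3) \<in> S}"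

definition area_z0 :: "(real^3) set \<Rightarrow> real" where
  "area_z0 S = measure lebesgue {q :: real^2. (vector [q$1, q$2, 0] :: real^3) \<in> S}"

end

theory Submission
  imports Defs
begin

text \<open>
  In spherical coordinates \<open>Pt \<alpha> \<beta>\<close> about the x-axis, the part of \<open>K\<close> whose azimuth \<open>\<beta>\<close> lies
  between \<open>a\<close> and \<open>b\<close> has volume \<open>\<integral>\<^sub>a\<^sup>b \<integral>\<^sub>0\<^sup>\<pi> \<rho>(\<alpha>,\<beta>)\<^sup>3 sin \<alpha> d\<alpha> d\<beta> / 3\<close>, and in the plane
  through the x-axis at azimuth \<open>\<beta>\<close> the part of the section with polar angle between \<open>a\<close> and \<open>b\<close>
  has area \<open>\<integral>\<^sub>a\<^sup>b \<rho>(\<alpha>,\<beta>)\<^sup>2 d\<alpha> / 2\<close>, where \<open>\<rho>\<close> is the radial function of \<open>K\<close> (change of variables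
  along the map \<open>(s, \<alpha>, \<beta>) \<mapsto> s \<rho>(\<alpha>,\<beta>) Pt \<alpha> \<beta>\<close>, which needs the smoothness of \<open>K\<close>).
  So \<open>\<Theta>\<close> bisects the volume of \<open>K \<inter> {z \<ge> 0}\<close> by a plane through the x-axis, and \<open>\<Phi>\<close>, \<open>\<Psi>\<close>
  bisect the sections at azimuth \<open>0\<close> and \<open>\<Theta>\<close> by lines through the origin.
  The inverse of \<open>Amat K\<close> is a shear with determinant 1 that maps the coordinate quarter-spaces
  and quarter-planes occurring in the statement onto exactly these halves (for the half
  \<open>z \<le> 0\<close> of the plane \<open>y = 0\<close> after reflecting through the origin), scaling both halves of each
  pair by the same factor.
\<close>

section \<open>Radial function of a convex body\<close>

lemma radial_ray_eq_interval:
  fixes K :: "(real^3) set"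
  assumes "compact K" "convex K" "0 \<in> K" "u \<noteq> 0"
  shows "{t. 0 \<le> t \<and> t *\<^sub>R u \<in> K} = {0..radial K u}"
proof -
  define T where "T = {t. 0 \<le> t \<and> t *\<^sub>R u \<in> K}"
  obtain B where B: "\<And>x. x \<in> K \<Longrightarrow> norm x \<le> B"
    using compact_imp_bounded[OF assms(1)] bounded_iff by blast
  have "closed T"
    unfolding T_def using compact_imp_closed[OF assms(1)]
    by (intro closed_Collect_conj closed_Collect_le continuous_closed_vimage[unfolded vimage_def])
      (auto intro: continuous_intros)
  moreover have "bounded T"
    unfolding bounded_iff T_def using B assms(4)
    by (intro exI[of _ "B / norm u"]) (force simp: field_simps dest: B)
  moreover have "0 \<in> T" using assms(3) by (simp add: T_def)
  ultimately obtain s where s: "s \<in> T" "\<And>t. t \<in> T \<Longrightarrow> t \<le> s"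
    using compact_attains_sup[of T] by (metis compact_eq_bounded_closed empty_iff)
  have "T = {0..s}"
  proof (intro set_eqI iffI)
    fix t assume t: "t \<in> {0..s}"
    show "t \<in> T"
    proof (cases "s = 0")
      case False
      then have "t *\<^sub>R u = (t / s) *\<^sub>R (s *\<^sub>R u) + (1 - t / s) *\<^sub>R 0" by simp
      also have "\<dots> \<in> K"
        using s t False assms(3) by (intro convexD[OF assms(2)]) (auto simp: T_def)
      finally show ?thesis using t by (simp add: T_def)
    qed (use t assms(3) in \<open>auto simp: T_def\<close>)
  qed (use s in \<open>auto simp: T_def\<close>)
  moreover have "radial K u = s"
    using s unfolding radial_def T_def[symmetric] by (intro cSup_eq_maximum) auto
  ultimately show ?thesis by (simp add: T_def)
qed

lemma scaleR_mem_iff_le_radial: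
  fixes K :: "(real^3) set"
  assumes "compact K" "convex K" "0 \<in> K" "u \<noteq> 0" "0 \<le> t"
  shows "t *\<^sub>R u \<in> K \<longleftrightarrow> t \<le> radial K u"
  using radial_ray_eq_interval[OF assms(1-4)] assms(5)
  by (metis (no_types, lifting) atLeastAtMost_iff mem_Collect_eq)

lemma radial_ge_if_ball_subset:
  fixes K :: "(real^3) set"
  assumes "compact K" "convex K" "0 < e" "ball 0 e \<subseteq> K" "u \<noteq> 0"
  shows "e / (2 * norm u) \<le> radial K u"
proof -
  have "(e / (2 * norm u)) *\<^sub>R u \<in> K" using assms(3,5) by (intro subsetD[OF assms(4)]) simp
  moreover have "0 \<in> K" using assms(3,4) by auto
  ultimately show ?thesis using scaleR_mem_iff_le_radial[OF assms(1,2) _ assms(5)] assms(3) by simp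
qed

lemma radial_pos:
  fixes K :: "(real^3) set"
  assumes "compact K" "convex K" "0 \<in> interior K" "u \<noteq> 0"
  shows "0 < radial K u"
proof -
  obtain e where "0 < e" "ball 0 e \<subseteq> K" using assms(3) by (meson mem_interior)
  then show ?thesis
    using radial_ge_if_ball_subset[OF assms(1,2) _ _ assms(4)] assms(4)
    by (smt (verit) divide_pos_pos zero_less_norm_iff)
qed

lemma gauge_eq_inverse_radial:
  fixes K :: "(real^3) set"
  assumes "compact K" "convex K" "0 \<in> interior K" "u \<noteq> 0"
  shows "gauge K u = 1 / radial K u"
proof -
  have R: "0 < radial K u" by (rule radial_pos[OF assms])
  have "{t. 0 < t \<and> u \<in> (\<lambda>p. t *\<^sub>R p) ` K} = {1 / radial K u..}"
  proof (intro set_eqI iffI)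
    fix t assume "t \<in> {t. 0 < t \<and> u \<in> (\<lambda>p. t *\<^sub>R p) ` K}"
    then have "0 < t" "(1 / t) *\<^sub>R u \<in> K" by auto
    then show "t \<in> {1 / radial K u..}"
      using scaleR_mem_iff_le_radial[OF assms(1,2) _ assms(4), of "1 / t"] interior_subset assms(3) R
      by (auto simp: field_simps)
  next
    fix t assume t: "t \<in> {1 / radial K u..}"
    then have "0 < t" using R by (auto intro: less_le_trans[of 0 "1 / radial K u"])
    moreover have "(1 / t) *\<^sub>R u \<in> K"
      using scaleR_mem_iff_le_radial[OF assms(1,2) _ assms(4), of "1 / t"] interior_subset assms(3) R t
        \<open>0 < t\<close>
      by (auto simp: field_simps)
    ultimately show "t \<in> {t. 0 < t \<and> u \<in> (\<lambda>p. t *\<^sub>R p) ` K}"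
      by (auto intro!: image_eqI[of u _ "(1 / t) *\<^sub>R u"])
  qed
  then show ?thesis by (simp add: gauge_def)
qed

lemma radial_differentiable_at:
  fixes K :: "(real^3) set"
  assumes "compact K" "convex K" "0 \<in> interior K" "gauge K differentiable (at u)" "u \<noteq> 0"
  shows "radial K differentiable (at u)"
proof -
  have "(\<lambda>x. 1 / gauge K x) differentiable (at u)"
    using assms(4) gauge_eq_inverse_radial[OF assms(1-3,5)] radial_pos[OF assms(1-3,5)]
    by (intro derivative_intros) auto
  then obtain D where "((\<lambda>x. 1 / gauge K x) has_derivative D) (at u)" by (auto simp: differentiable_def)
  then have "(radial K has_derivative D) (at u)"
    by (rule has_derivative_transform_within_open[of _ _ _ _ "- {0}"])
       (use assms(5) gauge_eq_inverse_radial[OF assms(1-3)] in auto)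
  then show ?thesis by (auto simp: differentiable_def)
qed

lemma scaleR_mem_if_interior:
  fixes x :: "'a::real_normed_vector"
  assumes "x \<in> interior S"
  obtains c where "1 < c" "c *\<^sub>R x \<in> S"
proof -
  obtain e where e: "0 < e" "ball x e \<subseteq> S" using assms by (meson mem_interior)
  define c where "c = 1 + e / (2 * (norm x + 1))"
  have "1 < c" using e by (simp add: c_def add_nonneg_pos)
  have "dist (c *\<^sub>R x) x = e / (2 * (norm x + 1)) * norm x"
    using e by (simp add: c_def dist_norm algebra_simps)
  also have "\<dots> \<le> e / (2 * (norm x + 1)) * (norm x + 1)"
    using e by (intro mult_left_mono) auto
  also have "\<dots> = e / 2"
    using norm_ge_zero[of x] by (simp add: field_simps del: norm_ge_zero)
  also have "\<dots> < e" using e by simp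
  finally have "c *\<^sub>R x \<in> S" using e by (auto simp: dist_commute)
  with \<open>1 < c\<close> show thesis by (rule that)
qed

lemma zero_in_interior_if_symmetric:
  fixes K :: "'a::euclidean_space set"
  assumes "convex K" "interior K \<noteq> {}" "\<And>x. x \<in> K \<Longrightarrow> - x \<in> K"
  shows "0 \<in> interior K"
proof -
  obtain p where p: "p \<in> interior K" using assms(2) by blast
  have "uminus ` K = K" using assms(3) by force
  then have "- p \<in> interior K" using p interior_negations[of K] by (metis imageI)
  then have "(1/2) *\<^sub>R p + (1/2) *\<^sub>R (- p) \<in> interior K"
    using p by (intro convexD[OF convex_interior[OF assms(1)]]) auto
  then show ?thesis by simp
qed

lemma KhatD:
  assumes "K \<in> Khat"
  shows "compact K" "convex K" "0 \<in> interior K" "\<And>x. x \<in> K \<Longrightarrow> - x \<in> K"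
    and "\<And>u. u \<noteq> 0 \<Longrightarrow> radial K differentiable (at u)"
proof -
  show K: "compact K" "convex K" "\<And>x. x \<in> K \<Longrightarrow> - x \<in> K"
    using assms by (auto simp: Khat_def convex_body3_def centrally_symmetric_def)
  show 0: "0 \<in> interior K"
    using assms K by (intro zero_in_interior_if_symmetric) (auto simp: Khat_def convex_body3_def)
  have "iter_dd [0] (gauge K) (- {0})" using assms by (simp add: Khat_def smooth_on3_def)
  then show "radial K differentiable (at u)" if "u \<noteq> 0" for u
    using that by (intro radial_differentiable_at[OF K(1,2) 0]) auto
qed

section \<open>Coordinates, determinants and iterated integrals\<close>

lemma vector_3_eq_axis_sum:
  "(vector [a, b, c] :: real^3) = a *\<^sub>R axis 1 1 + b *\<^sub>R axis 2 1 + c *\<^sub>R axis 3 1"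
  by (simp add: vec_eq_iff forall_3 axis_def)

lemma vector_2_eq_axis_sum: "(vector [a, b] :: real^2) = a *\<^sub>R axis 1 1 + b *\<^sub>R axis 2 1"
  by (simp add: vec_eq_iff forall_2 axis_def)


lemma norm_vector_3: "norm (vector [a, b, c] :: real^3) = sqrt (a\<^sup>2 + b\<^sup>2 + c\<^sup>2)"
  by (simp add: norm_vec_def L2_set_def sum_3)

lemma norm_vector_2: "norm (vector [a, b] :: real^2) = sqrt (a\<^sup>2 + b\<^sup>2)"
  by (simp add: norm_vec_def L2_set_def sum_2)

lemma has_derivative_vec_nth_eq: "f' = (\<lambda>h. h $ i) \<Longrightarrow> ((\<lambda>x. x $ i) has_derivative f') F"
  using bounded_linear_vec_nth[THEN bounded_linear_imp_has_derivative] by simp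

lemma has_derivative_vec_nth: "((\<lambda>x. x $ i) has_derivative (\<lambda>h. h $ i)) F"
  by (rule has_derivative_vec_nth_eq) (rule refl)

lemma has_derivative_vector_3:
  assumes "(f1 has_derivative f1') F" "(f2 has_derivative f2') F" "(f3 has_derivative f3') F"
  shows "((\<lambda>x. vector [f1 x, f2 x, f3 x] :: real^3) has_derivative
           (\<lambda>h. vector [f1' h, f2' h, f3' h])) F"
  unfolding vector_3_eq_axis_sum using assms by (auto intro!: derivative_eq_intros)

lemma has_derivative_vector_2:
  assumes "(f1 has_derivative f1') F" "(f2 has_derivative f2') F"
  shows "((\<lambda>x. vector [f1 x, f2 x] :: real^2) has_derivative (\<lambda>h. vector [f1' h, f2' h])) F"
  unfolding vector_2_eq_axis_sum using assms by (auto intro!: derivative_eq_intros)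

lemma det_3_columns:
  fixes A :: "real^3^3"
  assumes "\<And>i. A$i$1 = u * p$i" "\<And>i. A$i$2 = k * p$i + c * q$i" "\<And>i. A$i$3 = l * p$i + c * w$i"
  shows "det A = u * c\<^sup>2 *
    (p$1 * (q$2 * w$3 - q$3 * w$2) - p$2 * (q$1 * w$3 - q$3 * w$1) + p$3 * (q$1 * w$2 - q$2 * w$1))"
  unfolding det_3 assms by algebra

lemma det_2_columns:
  fixes A :: "real^2^2"
  assumes "\<And>i. A$i$1 = u * p$i" "\<And>i. A$i$2 = k * p$i + c * q$i"
  shows "det A = u * c * (p$1 * q$2 - p$2 * q$1)"
  unfolding det_2 assms by algebra

lemma prod_UNIV_3: "prod f (UNIV::3 set) = f 1 * f 2 * f 3"
  unfolding UNIV_3 by (simp add: ac_simps)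

lemma prod_UNIV_2: "prod f (UNIV::2 set) = f 1 * f 2"
  unfolding UNIV_2 by (simp add: ac_simps)

lemma content_cbox_cart3:
  fixes p q :: "real^3"
  shows "Henstock_Kurzweil_Integration.content (cbox p q) =
    Henstock_Kurzweil_Integration.content {p$3..q$3} *
      (Henstock_Kurzweil_Integration.content {p$2..q$2} * Henstock_Kurzweil_Integration.content {p$1..q$1})"
  using interval_ne_empty_cart(1)[of p q]
  by (auto simp: content_cbox_if_cart prod_UNIV_3 forall_3 content_real_if not_le)

lemma content_cbox_cart2:
  fixes p q :: "real^2"
  shows "Henstock_Kurzweil_Integration.content (cbox p q) =
    Henstock_Kurzweil_Integration.content {p$2..q$2} * Henstock_Kurzweil_Integration.content {p$1..q$1}"
  using interval_ne_empty_cart(1)[of p q]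
  by (auto simp: content_cbox_if_cart prod_UNIV_2 forall_2 content_real_if not_le)

lemma integral_cbox_transfer:
  fixes g :: "'a::euclidean_space \<Rightarrow> 'b::euclidean_space" and F :: "'a \<Rightarrow> real"
  assumes hg: "\<And>x. h (g x) = x" and gh: "\<And>y. g (h y) = y"
    and cont: "continuous_on UNIV g" "continuous_on UNIV h"
    and box: "\<And>y p q. h y \<in> cbox p q \<longleftrightarrow> y \<in> cbox (g p) (g q)"
    and content: "\<And>p q. Henstock_Kurzweil_Integration.content (cbox (g p) (g q))
                        = Henstock_Kurzweil_Integration.content (cbox p q)"
    and F: "continuous_on (cbox u v) F"
  shows "integral (cbox u v) F = integral (cbox (g u) (g v)) (\<lambda>y. F (h y))"
proof -
  have img: "y \<in> g ` A \<longleftrightarrow> h y \<in> A" "x \<in> h ` B \<longleftrightarrow> g x \<in> B" for x y A B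
    by (metis gh hg image_iff)+
  have gbox: "g ` cbox p q = cbox (g p) (g q)" for p q
    by (simp add: set_eq_iff img(1) flip: box)
  have hbox: "h ` cbox p q = cbox (h p) (h q)" for p q
    using box[of "g _" "h p" "h q"] by (simp add: set_eq_iff img(2) hg gh)
  have "continuous_on (cbox (g u) (g v)) (\<lambda>y. F (h y))"
    by (rule continuous_on_compose2[OF F continuous_on_subset[OF cont(2)]]) (auto simp: box)
  then have "((\<lambda>y. F (h y)) has_integral integral (cbox (g u) (g v)) (\<lambda>y. F (h y))) (cbox (g u) (g v))"
    by (simp add: integrable_continuous integrable_integral)
  then have "((\<lambda>x. F (h (g x))) has_integral (1 / 1) *\<^sub>R integral (cbox (g u) (g v)) (\<lambda>y. F (h y)))
      (h ` cbox (g u) (g v))"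
    using cont(1) hg gh gbox hbox content
    by (intro has_integral_twiddle[where r = 1]) (auto simp: continuous_on_eq_continuous_at)
  then show ?thesis by (simp add: hbox hg integral_unique)
qed

lemma integral_cbox_cart3:
  fixes F :: "real^3 \<Rightarrow> real"
  assumes F: "continuous_on (cbox u v) F"
  shows "integral (cbox u v) F =
    integral {u$3..v$3} (\<lambda>z. integral {u$2..v$2} (\<lambda>y. integral {u$1..v$1} (\<lambda>x. F (vector [x, y, z]))))"
proof -
  define g :: "real^3 \<Rightarrow> real \<times> real \<times> real" where "g x = (x$3, x$2, x$1)" for x
  define h :: "real \<times> real \<times> real \<Rightarrow> real^3" where "h w = vector [snd (snd w), fst (snd w), fst w]" for w
  have box: "h y \<in> cbox p q \<longleftrightarrow> y \<in> cbox (g p) (g q)" for y p q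
    by (cases y) (auto simp: h_def g_def mem_box_cart forall_3 cbox_Pair_iff)
  have h: "continuous_on UNIV h" unfolding h_def vector_3_eq_axis_sum by (intro continuous_intros)
  have Fh: "continuous_on (cbox (g u) (g v)) (\<lambda>y. F (h y))"
    by (rule continuous_on_compose2[OF F continuous_on_subset[OF h]]) (auto simp: box)
  have "integral (cbox u v) F = integral (cbox (g u) (g v)) (\<lambda>y. F (h y))"
  proof (rule integral_cbox_transfer[OF _ _ _ h box _ F])
    show "h (g x) = x" for x by (simp add: g_def h_def vec_eq_iff forall_3)
    show "g (h y) = y" for y by (simp add: g_def h_def)
    show "continuous_on UNIV g" unfolding g_def by (intro continuous_intros)
    show "Henstock_Kurzweil_Integration.content (cbox (g p) (g q))
        = Henstock_Kurzweil_Integration.content (cbox p q)" for p q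
      by (simp add: g_def content_Pair content_cbox_cart3 cbox_interval[where 'a=real])
  qed
  also have "\<dots> = integral {u$3..v$3} (\<lambda>z. integral (cbox (u$2, u$1) (v$2, v$1)) (\<lambda>w. F (h (z, w))))"
    using integral_prod_continuous[OF Fh[unfolded g_def]] by (simp add: g_def cbox_interval[where 'a=real])
  also have "\<dots> = integral {u$3..v$3} (\<lambda>z. integral {u$2..v$2} (\<lambda>y. integral {u$1..v$1} (\<lambda>x. F (vector [x, y, z]))))"
  proof (rule integral_cong)
    fix z assume "z \<in> {u$3..v$3}"
    then have "continuous_on (cbox (u$2, u$1) (v$2, v$1)) (\<lambda>w. F (h (z, w)))"
      by (intro continuous_on_compose2[OF Fh, of _ "\<lambda>w. (z, w)"] continuous_intros)
         (auto simp: g_def cbox_Pair_iff cbox_interval[where 'a=real])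
    from integral_prod_continuous[OF this] show "integral (cbox (u$2, u$1) (v$2, v$1)) (\<lambda>w. F (h (z, w)))
        = integral {u$2..v$2} (\<lambda>y. integral {u$1..v$1} (\<lambda>x. F (vector [x, y, z])))"
      by (simp add: h_def cbox_interval[where 'a=real])
  qed
  finally show ?thesis .
qed

lemma integral_cbox_cart2:
  fixes F :: "real^2 \<Rightarrow> real"
  assumes F: "continuous_on (cbox u v) F"
  shows "integral (cbox u v) F = integral {u$2..v$2} (\<lambda>y. integral {u$1..v$1} (\<lambda>x. F (vector [x, y])))"
proof -
  define g :: "real^2 \<Rightarrow> real \<times> real" where "g x = (x$2, x$1)" for x
  define h :: "real \<times> real \<Rightarrow> real^2" where "h w = vector [snd w, fst w]" for w
  have box: "h y \<in> cbox p q \<longleftrightarrow> y \<in> cbox (g p) (g q)" for y p q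
    by (cases y) (auto simp: h_def g_def mem_box_cart forall_2 cbox_Pair_iff)
  have h: "continuous_on UNIV h" unfolding h_def vector_2_eq_axis_sum by (intro continuous_intros)
  have Fh: "continuous_on (cbox (g u) (g v)) (\<lambda>y. F (h y))"
    by (rule continuous_on_compose2[OF F continuous_on_subset[OF h]]) (auto simp: box)
  have "integral (cbox u v) F = integral (cbox (g u) (g v)) (\<lambda>y. F (h y))"
  proof (rule integral_cbox_transfer[OF _ _ _ h box _ F])
    show "h (g x) = x" for x by (simp add: g_def h_def vec_eq_iff forall_2)
    show "g (h y) = y" for y by (simp add: g_def h_def)
    show "continuous_on UNIV g" unfolding g_def by (intro continuous_intros)
    show "Henstock_Kurzweil_Integration.content (cbox (g p) (g q))
        = Henstock_Kurzweil_Integration.content (cbox p q)" for p q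
      by (simp add: g_def content_Pair content_cbox_cart2 cbox_interval[where 'a=real])
  qed
  also have "\<dots> = integral {u$2..v$2} (\<lambda>y. integral {u$1..v$1} (\<lambda>x. F (vector [x, y])))"
    using integral_prod_continuous[OF Fh[unfolded g_def]]
    by (simp add: g_def h_def cbox_interval[where 'a=real])
  finally show ?thesis .
qed

lemma integral_power_01: "integral {0..1} (\<lambda>s::real. s ^ n) = 1 / Suc n"
proof -
  have "((\<lambda>s::real. s ^ Suc n / Suc n) has_real_derivative s ^ n) (at s within {0..1})" for s
    by (intro derivative_eq_intros) auto
  then have "((\<lambda>s. s ^ n) has_integral (1 ^ Suc n / Suc n - 0 ^ Suc n / Suc n)) {0..1::real}"
    by (intro fundamental_theorem_of_calculus) (auto simp: has_real_derivative_iff_has_vector_derivative)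
  then show ?thesis by (simp add: integral_unique)
qed

lemma negligible_plane_yz:
  "c2 \<noteq> 0 \<or> c3 \<noteq> 0 \<Longrightarrow> negligible {p::real^3. c2 * p$2 + c3 * p$3 = 0}"
  using negligible_hyperplane[of "vector [0, c2, c3] :: real^3" 0]
  by (auto simp: inner_vec_def sum_3 vec_eq_iff forall_3)

lemma negligible_line_2:
  "c1 \<noteq> 0 \<or> c2 \<noteq> 0 \<Longrightarrow> negligible {u::real^2. c1 * u$1 + c2 * u$2 = 0}"
  using negligible_hyperplane[of "vector [c1, c2] :: real^2" 0]
  by (auto simp: inner_vec_def sum_2 vec_eq_iff forall_2)

lemma sin_or_cos_nonzero: "sin a \<noteq> 0 \<or> cos (a::real) \<noteq> 0"
  using sin_cos_squared_add[of a] by (auto simp: power2_eq_square)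

lemma less_if_sin_diff_pos:
  fixes x y :: real
  assumes "x \<in> {0..pi}" "y \<in> {0..pi}" "0 < sin (y - x)"
  shows "x < y"
proof (rule ccontr)
  assume "\<not> x < y"
  then have "0 \<le> sin (x - y)" using assms by (intro sin_ge_zero) auto
  then show False using assms(3) by (simp add: sin_diff mult.commute)
qed

definition dir2 :: "real \<Rightarrow> real^2" where
  "dir2 a = vector [cos a, sin a]"

lemma dir2_nth [simp]: "dir2 a $ 1 = cos a" "dir2 a $ 2 = sin a"
  by (simp_all add: dir2_def)

lemma norm_dir2 [simp]: "norm (dir2 a) = 1"
  by (simp add: dir2_def norm_vector_2)

lemma dir2_polar_coordinates:
  fixes u :: "real^2"
  assumes "0 < u$2"
  obtains a where "a \<in> {0<..<pi}" "u = norm u *\<^sub>R dir2 a"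
proof -
  have nu: "norm u > 0" using assms by auto
  have "(norm u)\<^sup>2 = (u$1)\<^sup>2 + (u$2)\<^sup>2" by (simp add: norm_vec_def L2_set_def sum_2)
  then have "(u$1 / norm u)\<^sup>2 + (u$2 / norm u)\<^sup>2 = 1"
    using nu by (simp add: power_divide flip: add_divide_distrib) (use assms in simp)
  then obtain a where a: "0 \<le> a" "a \<le> pi" "u$1 / norm u = cos a" "u$2 / norm u = sin a"
    using sincos_total_pi[of "u$2 / norm u"] nu assms by auto
  have "sin a > 0" using a(4) nu assms by (metis divide_pos_pos)
  then have "a \<in> {0<..<pi}" using a by (auto intro: order.not_eq_order_implies_strict)
  moreover have "u$1 = norm u * cos a" "u$2 = norm u * sin a"
    using a(3,4) nu by (simp_all add: divide_eq_eq mult.commute)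
  then have "u = norm u *\<^sub>R dir2 a" by (simp add: vec_eq_iff forall_2)
  ultimately show thesis by (rule that)
qed

lemma has_derivative_dir2:
  "((\<lambda>x::real^2. dir2 (x$2)) has_derivative (\<lambda>h. h$2 *\<^sub>R vector [- sin (x$2), cos (x$2)]))
     (at x within S)"
  unfolding dir2_def
  by (rule has_derivative_eq_rhs[OF has_derivative_vector_2];
      ((rule derivative_eq_intros has_derivative_vec_nth_eq refl)+)?)
     (auto simp: vec_eq_iff forall_2 algebra_simps)

lemma differentiable_dir2: "dir2 differentiable (at a)"
  unfolding dir2_def differentiable_def
  by (rule exI, rule has_derivative_vector_2) (auto intro: derivative_intros)

lemma Pt_nth [simp]: "Pt a b $ 1 = cos a" "Pt a b $ 2 = sin a * cos b" "Pt a b $ 3 = sin a * sin b"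
  by (simp_all add: Pt_def)

lemma norm_Pt [simp]: "norm (Pt a b) = 1"
proof -
  have "(sin a * cos b)\<^sup>2 + (sin a * sin b)\<^sup>2 = (sin a)\<^sup>2"
    by (simp add: power_mult_distrib flip: distrib_left)
  then show ?thesis unfolding Pt_def norm_vector_3 by (simp add: add.assoc)
qed

lemma Pt_neq_0 [simp]: "Pt a b \<noteq> 0"
  using norm_Pt[of a b] by (metis norm_zero zero_neq_one)

lemma Pt_eq_imp_angles_eq:
  assumes "Pt a b = Pt a' b'" "a \<in> {0<..<pi}" "b \<in> {0<..<pi}" "a' \<in> {0<..<pi}" "b' \<in> {0<..<pi}"
  shows "a = a'" "b = b'"
proof -
  show a: "a = a'"
    using arg_cong[OF assms(1), of "\<lambda>v. v$1"] assms(2,4) by (auto intro: cos_inj_pi)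
  have "sin a > 0" using assms(2) by (auto intro: sin_gt_zero)
  then show "b = b'"
    using arg_cong[OF assms(1), of "\<lambda>v. v$2"] a assms(3,5) by (auto intro: cos_inj_pi)
qed

lemma Pt_spherical_coordinates:
  fixes p :: "real^3"
  assumes "0 < p$3"
  obtains a b where "a \<in> {0<..<pi}" "b \<in> {0<..<pi}" "p = norm p *\<^sub>R Pt a b"
proof -
  obtain b where b: "b \<in> {0<..<pi}" "vector [p$2, p$3] = norm (vector [p$2, p$3] :: real^2) *\<^sub>R dir2 b"
    using dir2_polar_coordinates[of "vector [p$2, p$3]"] assms by auto
  define s where "s = norm (vector [p$2, p$3] :: real^2)"
  have "0 < s" using assms by (simp add: s_def norm_vector_2 add_nonneg_pos)
  then obtain a where a: "a \<in> {0<..<pi}" "vector [p$1, s] = norm (vector [p$1, s] :: real^2) *\<^sub>R dir2 a"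
    using dir2_polar_coordinates[of "vector [p$1, s]"] by auto
  have "norm (vector [p$1, s] :: real^2) = norm p"
    unfolding s_def norm_vector_2 by (simp add: norm_vec_def L2_set_def sum_3 add.assoc)
  \<comment> \<open>used as rewrite rules these equations would loop, since \<open>p\<close> occurs on both sides\<close>
  note a' = a(2)[unfolded this] and b' = b(2)[folded s_def]
  have "p$1 = norm p * cos a" "s = norm p * sin a"
    using arg_cong[OF a', of "\<lambda>v. v$1"] arg_cong[OF a', of "\<lambda>v. v$2"] by simp_all
  moreover have "p$2 = s * cos b" "p$3 = s * sin b"
    using arg_cong[OF b', of "\<lambda>v. v$1"] arg_cong[OF b', of "\<lambda>v. v$2"] by simp_all
  ultimately have "p$i = (norm p *\<^sub>R Pt a b)$i" for i
    using exhaust_3[of i] by (elim disjE) (simp_all only: vector_scaleR_component Pt_nth mult.assoc real_scaleR_def)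
  then have "p = norm p *\<^sub>R Pt a b" by (simp add: vec_eq_iff)
  with a b that show thesis by blast
qed

definition Pt_dalpha :: "real \<Rightarrow> real \<Rightarrow> real^3" where
  "Pt_dalpha a b = vector [- sin a, cos a * cos b, cos a * sin b]"

definition Pt_dbeta :: "real \<Rightarrow> real \<Rightarrow> real^3" where
  "Pt_dbeta a b = vector [0, - sin a * sin b, sin a * cos b]"

lemma has_derivative_Pt:
  "((\<lambda>x::real^3. Pt (x$2) (x$3)) has_derivative
     (\<lambda>h. h$2 *\<^sub>R Pt_dalpha (x$2) (x$3) + h$3 *\<^sub>R Pt_dbeta (x$2) (x$3))) (at x within S)"
  unfolding Pt_def Pt_dalpha_def Pt_dbeta_def
  by (rule has_derivative_eq_rhs[OF has_derivative_vector_3];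
      ((rule derivative_eq_intros has_derivative_vec_nth_eq refl)+)?)
     (auto simp: vec_eq_iff forall_3 algebra_simps)

lemma continuous_on_Pt: "continuous_on UNIV (\<lambda>x::real^3. Pt (x$2) (x$3))"
  unfolding Pt_def vector_3_eq_axis_sum by (intro continuous_intros)

lemma continuous_on_radial_Pt:
  fixes K :: "(real^3) set" and f g :: "'a::t2_space \<Rightarrow> real"
  assumes "\<And>u. u \<noteq> 0 \<Longrightarrow> radial K differentiable (at u)"
    and "continuous_on S f" "continuous_on S g"
  shows "continuous_on S (\<lambda>x. radial K (Pt (f x) (g x)))"
proof -
  have "continuous (at u) (radial K)" if "u \<in> - {0}" for u
    using assms(1) that differentiable_imp_continuous_within by auto
  then have "continuous_on (- {0}) (radial K)" by (simp add: continuous_at_imp_continuous_on)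
  moreover have "continuous_on S (\<lambda>x. Pt (f x) (g x))"
    unfolding Pt_def vector_3_eq_axis_sum by (intro continuous_intros assms(2,3))
  ultimately show ?thesis by (rule continuous_on_compose2) auto
qed

definition axial_plane :: "real \<Rightarrow> real^2 \<Rightarrow> real^3" where
  "axial_plane b u = vector [u$1, u$2 * cos b, u$2 * sin b]"

lemma axial_plane_dir2 [simp]: "axial_plane b (dir2 a) = Pt a b"
  by (simp add: axial_plane_def dir2_def Pt_def)

lemma linear_axial_plane: "linear (axial_plane b)"
  by (rule linearI) (simp_all add: axial_plane_def vec_eq_iff forall_3 algebra_simps)

lemma norm_axial_plane [simp]: "norm (axial_plane b u) = norm u"
proof -
  have "(u$2 * cos b)\<^sup>2 + (u$2 * sin b)\<^sup>2 = (u$2)\<^sup>2"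
    by (simp add: power_mult_distrib flip: distrib_left)
  then show ?thesis
    unfolding axial_plane_def norm_vector_3 by (simp add: add.assoc norm_vec_def L2_set_def sum_2)
qed

lemma compact_axial_slice:
  fixes K :: "(real^3) set"
  assumes "compact K"
  shows "compact {u. axial_plane b u \<in> K}"
proof -
  have "closed {u. axial_plane b u \<in> K}"
    using compact_imp_closed[OF assms]
    by (intro continuous_closed_vimage[unfolded vimage_def]
        linear_continuous_at[OF linear_axial_plane[unfolded linear_conv_bounded_linear]])
  moreover have "bounded {u. axial_plane b u \<in> K}"
    using compact_imp_bounded[OF assms] unfolding bounded_iff by (metis mem_Collect_eq norm_axial_plane)
  ultimately show ?thesis by (simp add: compact_eq_bounded_closed)
qed

lemma radial_Pt_pos:
  fixes K :: "(real^3) set"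
  assumes "compact K" "convex K" "0 \<in> interior K"
  shows "0 < radial K (Pt \<alpha> \<beta>)"
  by (rule radial_pos[OF assms Pt_neq_0])

lemma scaleR_Pt_mem_iff:
  fixes K :: "(real^3) set"
  assumes "compact K" "convex K" "0 \<in> interior K" "0 \<le> t"
  shows "t *\<^sub>R Pt \<alpha> \<beta> \<in> K \<longleftrightarrow> t \<le> radial K (Pt \<alpha> \<beta>)"
  using scaleR_mem_iff_le_radial[OF assms(1,2) _ Pt_neq_0 assms(4)] assms(3) interior_subset by blast

lemma scaleR_dir2_mem_axial_slice_iff:
  fixes K :: "(real^3) set"
  assumes "compact K" "convex K" "0 \<in> interior K" "0 \<le> t"
  shows "t *\<^sub>R dir2 \<alpha> \<in> {u. axial_plane \<beta> u \<in> K} \<longleftrightarrow> t \<le> radial K (Pt \<alpha> \<beta>)"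
  using scaleR_Pt_mem_iff[OF assms, of \<alpha> \<beta>] linear_cmul[OF linear_axial_plane] by simp

lemma differentiable_radial_Pt:
  fixes K :: "(real^3) set"
  assumes "\<And>u. u \<noteq> 0 \<Longrightarrow> radial K differentiable (at u)"
  shows "(\<lambda>\<alpha>. radial K (Pt \<alpha> \<beta>)) differentiable (at \<alpha>)"
proof -
  have "(\<lambda>\<alpha>. Pt \<alpha> \<beta>) = axial_plane \<beta> \<circ> dir2" by (simp add: fun_eq_iff)
  then have "(\<lambda>\<alpha>. Pt \<alpha> \<beta>) differentiable (at \<alpha>)"
    by (metis differentiable_chain_at differentiable_dir2 linear_axial_plane linear_imp_differentiable)
  then show ?thesis
    using differentiable_chain_at[of "\<lambda>\<alpha>. Pt \<alpha> \<beta>" \<alpha> "radial K"] assms[OF Pt_neq_0] by (simp add: o_def)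
qed

section \<open>Spherical and polar change of variables\<close>

text \<open>Spherical coordinates with the radius measured in units of \<open>R\<close>: for \<open>R = radial K\<close> the box
  \<open>(0, 1) \<times> (0, pi) \<times> (a, b)\<close> parametrises the part of \<open>K\<close> in the wedge between \<open>a\<close> and \<open>b\<close>.\<close>
definition spherical :: "(real^3 \<Rightarrow> real) \<Rightarrow> real^3 \<Rightarrow> real^3" where
  "spherical R x = (x$1 * R (Pt (x$2) (x$3))) *\<^sub>R Pt (x$2) (x$3)"

lemma spherical_derivative:
  fixes R :: "real^3 \<Rightarrow> real"
  assumes R: "(R has_derivative DR) (at (Pt (x$2) (x$3)))"
  obtains D where "(spherical R has_derivative D) (at x within S)"
    and "det (matrix D) = (x$1)\<^sup>2 * (R (Pt (x$2) (x$3)))^3 * sin (x$2)"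
proof -
  define P where "P = Pt (x$2) (x$3)"
  define Pa where "Pa = Pt_dalpha (x$2) (x$3)"
  define Pb where "Pb = Pt_dbeta (x$2) (x$3)"
  define D where "D (h::real^3) = (h$1 * R P + x$1 * DR (h$2 *\<^sub>R Pa + h$3 *\<^sub>R Pb)) *\<^sub>R P
                          + (x$1 * R P) *\<^sub>R (h$2 *\<^sub>R Pa + h$3 *\<^sub>R Pb)" for h
  have "(spherical R has_derivative D) (at x within S)"
    unfolding spherical_def D_def P_def Pa_def Pb_def
    by (rule has_derivative_eq_rhs[OF has_derivative_scaleR[OF has_derivative_mult[OF
          has_derivative_vec_nth has_derivative_compose[OF has_derivative_Pt R]] has_derivative_Pt]])
       (auto simp: fun_eq_iff algebra_simps)
  moreover have "det (matrix D) = (x$1)\<^sup>2 * (R P)^3 * sin (x$2)"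
  proof -
    have lin: "linear DR" using R by (rule has_derivative_linear)
    have "det (matrix D) = R P * (x$1 * R P)\<^sup>2 *
      (P$1 * (Pa$2 * Pb$3 - Pa$3 * Pb$2) - P$2 * (Pa$1 * Pb$3 - Pa$3 * Pb$1) + P$3 * (Pa$1 * Pb$2 - Pa$2 * Pb$1))"
      by (rule det_3_columns[where k = "x$1 * DR Pa" and l = "x$1 * DR Pb"])
         (simp_all add: matrix_def D_def axis_def linear_0[OF lin] algebra_simps)
    also have "P$1 * (Pa$2 * Pb$3 - Pa$3 * Pb$2) - P$2 * (Pa$1 * Pb$3 - Pa$3 * Pb$1)
        + P$3 * (Pa$1 * Pb$2 - Pa$2 * Pb$1) = sin (x$2)"
      unfolding P_def Pa_def Pb_def Pt_dalpha_def Pt_dbeta_def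
      by simp (use sin_cos_squared_add[of "x$2"] sin_cos_squared_add[of "x$3"] in algebra)
    finally show ?thesis by (simp add: power_mult_distrib power3_eq_cube power2_eq_square)
  qed
  ultimately show thesis unfolding P_def by (rule that)
qed

lemma inj_on_spherical:
  assumes pos: "\<And>u. norm u = 1 \<Longrightarrow> 0 < R u"
  shows "inj_on (spherical R) {x. 0 < x$1 \<and> x$2 \<in> {0<..<pi} \<and> x$3 \<in> {0<..<pi}}"
proof (rule inj_onI)
  fix x y assume x: "x \<in> {x. 0 < x$1 \<and> x$2 \<in> {0<..<pi} \<and> x$3 \<in> {0<..<pi}}"
    and y: "y \<in> {x. 0 < x$1 \<and> x$2 \<in> {0<..<pi} \<and> x$3 \<in> {0<..<pi}}"
    and eq: "spherical R x = spherical R y"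
  have Rx: "0 < R (Pt (x$2) (x$3))" and Ry: "0 < R (Pt (y$2) (y$3))" using pos by simp_all
  have r: "x$1 * R (Pt (x$2) (x$3)) = y$1 * R (Pt (y$2) (y$3))"
    using arg_cong[OF eq, of norm] x y Rx Ry by (simp add: spherical_def)
  then have "Pt (x$2) (x$3) = Pt (y$2) (y$3)"
    using eq x y Rx Ry unfolding spherical_def by simp
  then have "x$2 = y$2" "x$3 = y$3" using x y Pt_eq_imp_angles_eq by blast+
  moreover from this have "x$1 = y$1" using r Rx by simp
  ultimately show "x = y" by (simp add: vec_eq_iff forall_3)
qed

lemma integral_spherical_jacobian:
  fixes R :: "real^3 \<Rightarrow> real"
  assumes "continuous_on UNIV (\<lambda>x::real^3. R (Pt (x$2) (x$3)))"
  shows "integral (cbox (vector [0, 0, a]) (vector [1, pi, b]))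
      (\<lambda>x::real^3. (x$1)\<^sup>2 * (R (Pt (x$2) (x$3)) ^ 3 * sin (x$2)))
    = integral {a..b} (\<lambda>\<beta>. integral {0..pi} (\<lambda>\<alpha>. R (Pt \<alpha> \<beta>) ^ 3 * sin \<alpha>)) / 3"
proof -
  have inner: "integral {0..1} (\<lambda>s. s\<^sup>2 * (R (Pt \<alpha> \<beta>) ^ 3 * sin \<alpha>)) = R (Pt \<alpha> \<beta>) ^ 3 * sin \<alpha> / 3"
    for \<alpha> \<beta>
    using integral_mult_left[of "{0..1}" "\<lambda>s::real. s\<^sup>2"] by (simp add: integral_power_01)
  have "continuous_on UNIV (\<lambda>x::real^3. (x$1)\<^sup>2 * (R (Pt (x$2) (x$3)) ^ 3 * sin (x$2)))"
    using assms by (intro continuous_intros)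
  from integral_cbox_cart3[OF continuous_on_subset[OF this subset_UNIV]] show ?thesis
    by (simp only: vector_3 inner integral_divide)
qed

lemma measure_spherical_image:
  fixes R :: "real^3 \<Rightarrow> real"
  assumes diff: "\<And>u. norm u = 1 \<Longrightarrow> R differentiable (at u)"
    and pos: "\<And>u. norm u = 1 \<Longrightarrow> 0 < R u"
    and ab: "0 \<le> a" "a < b" "b \<le> pi"
  shows "spherical R ` box (vector [0, 0, a]) (vector [1, pi, b]) \<in> lmeasurable \<and>
    measure lebesgue (spherical R ` box (vector [0, 0, a]) (vector [1, pi, b])) =
      integral {a..b} (\<lambda>\<beta>. integral {0..pi} (\<lambda>\<alpha>. R (Pt \<alpha> \<beta>) ^ 3 * sin \<alpha>)) / 3"
proof -
  define lo where "lo = (vector [0, 0, a] :: real^3)"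
  define hi where "hi = (vector [1, pi, b] :: real^3)"
  define F where "F x = (x$1)\<^sup>2 * (R (Pt (x$2) (x$3)) ^ 3 * sin (x$2))" for x :: "real^3"
  have memB: "x \<in> box lo hi \<longleftrightarrow> 0 < x$1 \<and> x$1 < 1 \<and> 0 < x$2 \<and> x$2 < pi \<and> a < x$3 \<and> x$3 < b" for x
    by (simp add: lo_def hi_def mem_box_cart forall_3)
  have "\<exists>D. (spherical R has_derivative D) (at x within box lo hi) \<and> det (matrix D) = F x" for x
  proof -
    obtain DR where "(R has_derivative DR) (at (Pt (x$2) (x$3)))"
      using diff[of "Pt (x$2) (x$3)"] by (auto simp: differentiable_def)
    then show ?thesis by (rule spherical_derivative) (auto simp: F_def)
  qed
  then obtain D where D: "\<And>x. (spherical R has_derivative D x) (at x within box lo hi)"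
    and detD: "\<And>x. det (matrix (D x)) = F x" by metis
  have inj: "inj_on (spherical R) (box lo hi)"
    by (rule inj_on_subset[OF inj_on_spherical[OF pos]]) (use ab in \<open>auto simp: memB\<close>)
  have "continuous_on {u. norm u = 1} R"
    using diff by (auto intro!: differentiable_imp_continuous_on differentiable_at_imp_differentiable_on)
  then have contR: "continuous_on UNIV (\<lambda>x::real^3. R (Pt (x$2) (x$3)))"
    by (intro continuous_on_compose2[OF _ continuous_on_Pt]) auto
  then have contF: "continuous_on UNIV F" unfolding F_def by (intro continuous_intros)
  have "(F has_integral integral (cbox lo hi) F) (box lo hi)"
    unfolding has_integral_open_interval
    by (intro integrable_integral integrable_continuous continuous_on_subset[OF contF]) auto
  moreover have "\<bar>det (matrix (D x))\<bar> = F x" if "x \<in> box lo hi" for x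
  proof -
    have "0 < sin (x$2)" using that by (simp add: memB sin_gt_zero)
    then show ?thesis using pos[of "Pt (x$2) (x$3)"] by (simp add: detD F_def abs_mult)
  qed
  ultimately have "spherical R ` box lo hi \<in> lmeasurable \<and>
      measure lebesgue (spherical R ` box lo hi) = integral (cbox lo hi) F"
    using has_measure_differentiable_image[OF _ D inj] by (simp add: has_integral_eq)
  moreover have "integral (cbox lo hi) F =
      integral {a..b} (\<lambda>\<beta>. integral {0..pi} (\<lambda>\<alpha>. R (Pt \<alpha> \<beta>) ^ 3 * sin \<alpha>)) / 3"
    unfolding lo_def hi_def F_def by (rule integral_spherical_jacobian[OF contR])
  ultimately show ?thesis by (simp add: lo_def hi_def)
qed

definition polar :: "(real \<Rightarrow> real) \<Rightarrow> real^2 \<Rightarrow> real^2" where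
  "polar \<rho> x = (x$1 * \<rho> (x$2)) *\<^sub>R dir2 (x$2)"

lemma polar_derivative:
  fixes \<rho> :: "real \<Rightarrow> real"
  assumes \<rho>: "(\<rho> has_derivative D\<rho>) (at (x$2))"
  obtains D where "(polar \<rho> has_derivative D) (at x within S)"
    and "det (matrix D) = x$1 * (\<rho> (x$2))\<^sup>2"
proof -
  define E' where "E' = (vector [- sin (x$2), cos (x$2)] :: real^2)"
  define D where "D (h::real^2) = (h$1 * \<rho> (x$2) + x$1 * D\<rho> (h$2)) *\<^sub>R dir2 (x$2)
                                   + (x$1 * \<rho> (x$2)) *\<^sub>R (h$2 *\<^sub>R E')" for h
  have "(polar \<rho> has_derivative D) (at x within S)"
    unfolding polar_def D_def E'_def
    by (rule has_derivative_eq_rhs[OF has_derivative_scaleR[OF has_derivative_mult[OF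
          has_derivative_vec_nth has_derivative_compose[OF has_derivative_vec_nth \<rho>]] has_derivative_dir2]])
       (auto simp: fun_eq_iff algebra_simps)
  moreover have "det (matrix D) = x$1 * (\<rho> (x$2))\<^sup>2"
  proof -
    have lin: "linear D\<rho>" using \<rho> by (rule has_derivative_linear)
    have "det (matrix D) = \<rho> (x$2) * (x$1 * \<rho> (x$2)) * (cos (x$2) * E'$2 - sin (x$2) * E'$1)"
      by (rule det_2_columns[where k = "x$1 * D\<rho> 1" and p = "dir2 (x$2)", simplified])
         (simp_all add: matrix_def D_def axis_def linear_0[OF lin] algebra_simps)
    then show ?thesis by (simp add: E'_def power2_eq_square algebra_simps)
  qed
  ultimately show thesis by (rule that)
qed

lemma inj_on_polar:
  assumes pos: "\<And>\<alpha>. 0 < \<rho> \<alpha>"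
  shows "inj_on (polar \<rho>) {x. 0 < x$1 \<and> x$2 \<in> {0<..<pi}}"
proof (rule inj_onI)
  fix x y assume x: "x \<in> {x. 0 < x$1 \<and> x$2 \<in> {0<..<pi}}"
    and y: "y \<in> {x. 0 < x$1 \<and> x$2 \<in> {0<..<pi}}" and eq: "polar \<rho> x = polar \<rho> y"
  have r: "x$1 * \<rho> (x$2) = y$1 * \<rho> (y$2)"
    using arg_cong[OF eq, of norm] x y pos[of "x$2"] pos[of "y$2"] by (simp add: polar_def)
  then have "dir2 (x$2) = dir2 (y$2)"
    using eq x y pos[of "x$2"] pos[of "y$2"] unfolding polar_def by simp
  from arg_cong[OF this, of "\<lambda>v. v$1"] have "x$2 = y$2"
    using x y by (auto intro: cos_inj_pi)
  moreover from this have "x$1 = y$1" using r pos[of "x$2"] by simp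
  ultimately show "x = y" by (simp add: vec_eq_iff forall_2)
qed

lemma integral_polar_jacobian:
  fixes \<rho> :: "real \<Rightarrow> real"
  assumes "continuous_on UNIV \<rho>"
  shows "integral (cbox (vector [0, a]) (vector [1, b])) (\<lambda>x::real^2. x$1 * (\<rho> (x$2))\<^sup>2)
    = integral {a..b} (\<lambda>\<alpha>. (\<rho> \<alpha>)\<^sup>2) / 2"
proof -
  have inner: "integral {0..1} (\<lambda>s. s * (\<rho> \<alpha>)\<^sup>2) = (\<rho> \<alpha>)\<^sup>2 / 2" for \<alpha>
    using integral_mult_left[of "{0..1}" "\<lambda>s::real. s ^ 1"] by (simp add: integral_power_01)
  have "continuous_on UNIV (\<lambda>x::real^2. \<rho> (x$2))"
    using assms by (rule continuous_on_compose2) (auto intro: continuous_intros)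
  then have "continuous_on UNIV (\<lambda>x::real^2. x$1 * (\<rho> (x$2))\<^sup>2)" by (intro continuous_intros)
  from integral_cbox_cart2[OF continuous_on_subset[OF this subset_UNIV]] show ?thesis
    by (simp only: vector_2 inner integral_divide)
qed

lemma measure_polar_image:
  fixes \<rho> :: "real \<Rightarrow> real"
  assumes diff: "\<And>\<alpha>. \<rho> differentiable (at \<alpha>)" and pos: "\<And>\<alpha>. 0 < \<rho> \<alpha>"
    and ab: "0 \<le> a" "a < b" "b \<le> pi"
  shows "polar \<rho> ` box (vector [0, a]) (vector [1, b]) \<in> lmeasurable \<and>
    measure lebesgue (polar \<rho> ` box (vector [0, a]) (vector [1, b])) = integral {a..b} (\<lambda>\<alpha>. (\<rho> \<alpha>)\<^sup>2) / 2"
proof -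
  define lo where "lo = (vector [0, a] :: real^2)"
  define hi where "hi = (vector [1, b] :: real^2)"
  define F where "F x = x$1 * (\<rho> (x$2))\<^sup>2" for x :: "real^2"
  have memB: "x \<in> box lo hi \<longleftrightarrow> 0 < x$1 \<and> x$1 < 1 \<and> a < x$2 \<and> x$2 < b" for x
    by (simp add: lo_def hi_def mem_box_cart forall_2)
  have "\<exists>D. (polar \<rho> has_derivative D) (at x within box lo hi) \<and> det (matrix D) = F x" for x
  proof -
    obtain D\<rho> where "(\<rho> has_derivative D\<rho>) (at (x$2))"
      using diff[of "x$2"] by (auto simp: differentiable_def)
    then show ?thesis by (rule polar_derivative) (auto simp: F_def)
  qed
  then obtain D where D: "\<And>x. (polar \<rho> has_derivative D x) (at x within box lo hi)"
    and detD: "\<And>x. det (matrix (D x)) = F x" by metis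
  have inj: "inj_on (polar \<rho>) (box lo hi)"
    by (rule inj_on_subset[OF inj_on_polar[OF pos]]) (use ab in \<open>auto simp: memB\<close>)
  have cont\<rho>: "continuous_on UNIV \<rho>"
    using diff differentiable_imp_continuous_within continuous_at_imp_continuous_on by blast
  then have "continuous_on UNIV (\<lambda>x::real^2. \<rho> (x$2))"
    by (rule continuous_on_compose2) (auto intro: continuous_intros)
  then have contF: "continuous_on UNIV F"
    unfolding F_def by (intro continuous_intros)
  have "(F has_integral integral (cbox lo hi) F) (box lo hi)"
    unfolding has_integral_open_interval
    by (intro integrable_integral integrable_continuous continuous_on_subset[OF contF]) auto
  moreover have "\<bar>det (matrix (D x))\<bar> = F x" if "x \<in> box lo hi" for x
    using that by (simp add: detD F_def memB)
  ultimately have "polar \<rho> ` box lo hi \<in> lmeasurable \<and>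
      measure lebesgue (polar \<rho> ` box lo hi) = integral (cbox lo hi) F"
    using has_measure_differentiable_image[OF _ D inj] by (simp add: has_integral_eq)
  moreover have "integral (cbox lo hi) F = integral {a..b} (\<lambda>\<alpha>. (\<rho> \<alpha>)\<^sup>2) / 2"
    unfolding lo_def hi_def F_def by (rule integral_polar_jacobian[OF cont\<rho>])
  ultimately show ?thesis by (simp add: lo_def hi_def)
qed

section \<open>Wedges and sectors\<close>

text \<open>For \<open>0 \<le> a \<le> b \<le> pi\<close>, the points whose projection to the yz-plane has polar angle in \<open>[a, b]\<close>.\<close>
definition wedge :: "real \<Rightarrow> real \<Rightarrow> (real^3) set" where
  "wedge a b = {p. 0 \<le> p$3 \<and> 0 \<le> cos a * p$3 - sin a * p$2 \<and> 0 \<le> sin b * p$2 - cos b * p$3}"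

lemma closed_wedge: "closed (wedge a b)"
  unfolding wedge_def by (intro closed_Collect_conj closed_Collect_le continuous_intros)

lemma wedge_forms_Pt:
  "cos a * (t *\<^sub>R Pt \<alpha> \<beta>)$3 - sin a * (t *\<^sub>R Pt \<alpha> \<beta>)$2 = t * sin \<alpha> * sin (\<beta> - a)"
  "sin b * (t *\<^sub>R Pt \<alpha> \<beta>)$2 - cos b * (t *\<^sub>R Pt \<alpha> \<beta>)$3 = t * sin \<alpha> * sin (b - \<beta>)"
  by (simp_all add: sin_diff algebra_simps)

lemma spherical_image_subset_wedge:
  fixes K :: "(real^3) set"
  assumes K: "compact K" "convex K" "0 \<in> interior K" and ab: "0 \<le> a" "b \<le> pi"
  shows "spherical (radial K) ` box (vector [0, 0, a]) (vector [1, pi, b]) \<subseteq> K \<inter> wedge a b"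
proof
  fix p assume "p \<in> spherical (radial K) ` box (vector [0, 0, a]) (vector [1, pi, b])"
  then obtain x :: "real^3" where x: "0 < x$1" "x$1 < 1" "0 < x$2" "x$2 < pi" "a < x$3" "x$3 < b"
    and p: "p = (x$1 * radial K (Pt (x$2) (x$3))) *\<^sub>R Pt (x$2) (x$3)"
    by (auto simp: spherical_def mem_box_cart forall_3)
  have t: "0 < x$1 * radial K (Pt (x$2) (x$3))" using x radial_Pt_pos[OF K] by simp
  have "p \<in> K"
    unfolding p using x radial_Pt_pos[OF K] by (subst scaleR_Pt_mem_iff[OF K less_imp_le[OF t]]) simp
  moreover have "0 < sin (x$2)" "0 < sin (x$3)" "0 < sin (x$3 - a)" "0 < sin (b - x$3)"
    using x ab by (auto intro!: sin_gt_zero)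
  then have "p \<in> wedge a b"
    unfolding wedge_def mem_Collect_eq p wedge_forms_Pt using t by (auto intro!: mult_nonneg_nonneg less_imp_le)
  ultimately show "p \<in> K \<inter> wedge a b" by blast
qed

lemma negligible_wedge_diff_spherical_image:
  fixes K :: "(real^3) set"
  assumes K: "compact K" "convex K" "0 \<in> interior K" and ab: "0 \<le> a" "a \<le> b" "b \<le> pi"
  shows "negligible (K \<inter> wedge a b - spherical (radial K) ` box (vector [0, 0, a]) (vector [1, pi, b]))"
proof -
  let ?S = "spherical (radial K) ` box (vector [0, 0, a]) (vector [1, pi, b])"
  define N where "N = frontier K \<union> {p. 0 * p$2 + 1 * p$3 = 0} \<union> {p. (- sin a) * p$2 + cos a * p$3 = 0}
    \<union> {p. sin b * p$2 + (- cos b) * p$3 = 0}"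
  have "negligible N"
    unfolding N_def using sin_or_cos_nonzero[of a] sin_or_cos_nonzero[of b]
    by (intro negligible_Un negligible_convex_frontier[OF K(2)] negligible_plane_yz) auto
  moreover have "K \<inter> wedge a b - ?S \<subseteq> N"
  proof
    fix p assume p: "p \<in> K \<inter> wedge a b - ?S"
    show "p \<in> N"
    proof (rule ccontr)
      assume "p \<notin> N"
      then have int: "p \<in> interior K" and p3: "0 < p$3" and pa: "0 < cos a * p$3 - sin a * p$2"
        and pb: "0 < sin b * p$2 - cos b * p$3"
        using p compact_imp_closed[OF K(1)] by (auto simp: N_def wedge_def frontier_def algebra_simps)
      define n where "n = norm p"
      have n: "0 < n" using p3 by (auto simp: n_def)
      obtain \<alpha> \<beta> where \<alpha>: "\<alpha> \<in> {0<..<pi}" and \<beta>: "\<beta> \<in> {0<..<pi}" and pP: "p = n *\<^sub>R Pt \<alpha> \<beta>"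
        using Pt_spherical_coordinates[OF p3] unfolding n_def by blast
      have "0 < n * sin \<alpha>" using n \<alpha> by (simp add: sin_gt_zero)
      then have "0 < sin (\<beta> - a)" "0 < sin (b - \<beta>)"
        using pa[unfolded pP wedge_forms_Pt] pb[unfolded pP wedge_forms_Pt] zero_less_mult_pos by blast+
      then have "a < \<beta>" "\<beta> < b" using ab \<beta> by (auto intro!: less_if_sin_diff_pos)
      moreover obtain c where c: "1 < c" "c *\<^sub>R p \<in> K" using scaleR_mem_if_interior[OF int] by blast
      then have "n < radial K (Pt \<alpha> \<beta>)"
        using n scaleR_Pt_mem_iff[OF K, of "c * n" \<alpha> \<beta>] pP by simp (smt (verit) mult_less_cancel_right1)
      ultimately have "(vector [n / radial K (Pt \<alpha> \<beta>), \<alpha>, \<beta>] :: real^3)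
          \<in> box (vector [0, 0, a]) (vector [1, pi, b])"
        using \<alpha> n radial_Pt_pos[OF K, of \<alpha> \<beta>] by (auto simp: mem_box_cart forall_3)
      moreover have "spherical (radial K) (vector [n / radial K (Pt \<alpha> \<beta>), \<alpha>, \<beta>]) = p"
        using radial_Pt_pos[OF K, of \<alpha> \<beta>] pP by (simp add: spherical_def)
      ultimately show False using p by blast
    qed
  qed
  ultimately show ?thesis by (rule negligible_subset)
qed

lemma measure_wedge:
  fixes K :: "(real^3) set"
  assumes K: "compact K" "convex K" "0 \<in> interior K"
    and diff: "\<And>u. u \<noteq> 0 \<Longrightarrow> radial K differentiable (at u)"
    and ab: "0 \<le> a" "a < b" "b \<le> pi"
  shows "measure lebesgue (K \<inter> wedge a b) =
    integral {a..b} (\<lambda>\<beta>. integral {0..pi} (\<lambda>\<alpha>. radial K (Pt \<alpha> \<beta>) ^ 3 * sin \<alpha>)) / 3"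
proof -
  let ?S = "spherical (radial K) ` box (vector [0, 0, a]) (vector [1, pi, b])"
  have S: "?S \<in> lmeasurable \<and> measure lebesgue ?S =
      integral {a..b} (\<lambda>\<beta>. integral {0..pi} (\<lambda>\<alpha>. radial K (Pt \<alpha> \<beta>) ^ 3 * sin \<alpha>)) / 3"
    by (intro measure_spherical_image ab) (auto intro!: diff radial_pos[OF K])
  have "measure lebesgue (K \<inter> wedge a b) = measure lebesgue ?S"
    using spherical_image_subset_wedge[OF K ab(1,3)]
      negligible_wedge_diff_spherical_image[OF K ab(1) less_imp_le[OF ab(2)] ab(3)]
    by (intro measure_negligible_symdiff[OF conjunct1[OF S]]) (simp add: Diff_eq_empty_iff[THEN iffD2])
  with S show ?thesis by simp
qed

text \<open>For \<open>0 \<le> a \<le> b \<le> pi\<close>, the points of the plane with polar angle in \<open>[a, b]\<close>.\<close>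
definition sector :: "real \<Rightarrow> real \<Rightarrow> (real^2) set" where
  "sector a b = {u. 0 \<le> u$2 \<and> 0 \<le> cos a * u$2 - sin a * u$1 \<and> 0 \<le> sin b * u$1 - cos b * u$2}"

lemma closed_sector: "closed (sector a b)"
  unfolding sector_def by (intro closed_Collect_conj closed_Collect_le continuous_intros)

lemma sector_forms_dir2:
  "cos a * (t *\<^sub>R dir2 \<alpha>)$2 - sin a * (t *\<^sub>R dir2 \<alpha>)$1 = t * sin (\<alpha> - a)"
  "sin b * (t *\<^sub>R dir2 \<alpha>)$1 - cos b * (t *\<^sub>R dir2 \<alpha>)$2 = t * sin (b - \<alpha>)"
  by (simp_all add: sin_diff algebra_simps)

lemma lmeasurable_axial_slice_sector:
  fixes K :: "(real^3) set"
  assumes "compact K"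
  shows "{u. axial_plane b u \<in> K} \<inter> sector a c \<in> lmeasurable"
  by (intro lmeasurable_compact compact_Int_closed compact_axial_slice assms closed_sector)

lemma polar_image_subset_sector:
  fixes K :: "(real^3) set"
  assumes K: "compact K" "convex K" "0 \<in> interior K" and ab: "0 \<le> a" "b \<le> pi"
  shows "polar (\<lambda>\<alpha>. radial K (Pt \<alpha> \<beta>)) ` box (vector [0, a]) (vector [1, b])
    \<subseteq> {u. axial_plane \<beta> u \<in> K} \<inter> sector a b"
proof
  fix u assume "u \<in> polar (\<lambda>\<alpha>. radial K (Pt \<alpha> \<beta>)) ` box (vector [0, a]) (vector [1, b])"
  then obtain x :: "real^2" where x: "0 < x$1" "x$1 < 1" "a < x$2" "x$2 < b"
    and u: "u = (x$1 * radial K (Pt (x$2) \<beta>)) *\<^sub>R dir2 (x$2)"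
    by (auto simp: polar_def mem_box_cart forall_2)
  have t: "0 < x$1 * radial K (Pt (x$2) \<beta>)" using x radial_Pt_pos[OF K] by simp
  have "u \<in> {u. axial_plane \<beta> u \<in> K}"
    unfolding u using x radial_Pt_pos[OF K]
    by (subst scaleR_dir2_mem_axial_slice_iff[OF K less_imp_le[OF t]]) simp
  moreover have "0 < sin (x$2)" "0 < sin (x$2 - a)" "0 < sin (b - x$2)"
    using x ab by (auto intro!: sin_gt_zero)
  then have "u \<in> sector a b"
    unfolding sector_def mem_Collect_eq u sector_forms_dir2 using t by (auto intro!: less_imp_le)
  ultimately show "u \<in> {u. axial_plane \<beta> u \<in> K} \<inter> sector a b" by blast
qed

lemma negligible_sector_diff_polar_image:
  fixes K :: "(real^3) set"
  assumes K: "compact K" "convex K" "0 \<in> interior K" and ab: "0 \<le> a" "a \<le> b" "b \<le> pi"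
  shows "negligible ({u. axial_plane \<beta> u \<in> K} \<inter> sector a b
    - polar (\<lambda>\<alpha>. radial K (Pt \<alpha> \<beta>)) ` box (vector [0, a]) (vector [1, b]))"
proof -
  let ?S = "polar (\<lambda>\<alpha>. radial K (Pt \<alpha> \<beta>)) ` box (vector [0, a]) (vector [1, b])"
  define C where "C = {u. axial_plane \<beta> u \<in> K}"
  define N where "N = frontier C \<union> {u. 0 * u$1 + 1 * u$2 = 0} \<union> {u. (- sin a) * u$1 + cos a * u$2 = 0}
    \<union> {u. sin b * u$1 + (- cos b) * u$2 = 0}"
  have "convex C"
    unfolding C_def by (rule convex_linear_vimage[OF linear_axial_plane K(2), unfolded vimage_def])
  then have "negligible N"
    unfolding N_def using sin_or_cos_nonzero[of a] sin_or_cos_nonzero[of b]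
    by (intro negligible_Un negligible_convex_frontier negligible_line_2) auto
  moreover have "C \<inter> sector a b - ?S \<subseteq> N"
  proof
    fix u assume u: "u \<in> C \<inter> sector a b - ?S"
    show "u \<in> N"
    proof (rule ccontr)
      assume "u \<notin> N"
      then have int: "u \<in> interior C" and u2: "0 < u$2" and ua: "0 < cos a * u$2 - sin a * u$1"
        and ub: "0 < sin b * u$1 - cos b * u$2"
        using u compact_imp_closed[OF compact_axial_slice[OF K(1)]]
        by (auto simp: C_def N_def sector_def frontier_def algebra_simps)
      define n where "n = norm u"
      have n: "0 < n" using u2 by (auto simp: n_def)
      obtain \<alpha> where \<alpha>: "\<alpha> \<in> {0<..<pi}" and uE: "u = n *\<^sub>R dir2 \<alpha>"
        using dir2_polar_coordinates[OF u2] unfolding n_def by blast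
      have "0 < sin (\<alpha> - a)" "0 < sin (b - \<alpha>)"
        using ua[unfolded uE sector_forms_dir2] ub[unfolded uE sector_forms_dir2] n zero_less_mult_pos by blast+
      then have "a < \<alpha>" "\<alpha> < b" using ab \<alpha> by (auto intro!: less_if_sin_diff_pos)
      moreover obtain c where c: "1 < c" "c *\<^sub>R u \<in> C" using scaleR_mem_if_interior[OF int] by blast
      then have "n < radial K (Pt \<alpha> \<beta>)"
        using n scaleR_dir2_mem_axial_slice_iff[OF K, of "c * n" \<alpha> \<beta>] uE unfolding C_def
        by simp (smt (verit) mult_less_cancel_right1)
      ultimately have "(vector [n / radial K (Pt \<alpha> \<beta>), \<alpha>] :: real^2) \<in> box (vector [0, a]) (vector [1, b])"
        using n radial_Pt_pos[OF K, of \<alpha> \<beta>] by (auto simp: mem_box_cart forall_2)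
      moreover have "polar (\<lambda>\<alpha>. radial K (Pt \<alpha> \<beta>)) (vector [n / radial K (Pt \<alpha> \<beta>), \<alpha>]) = u"
        using radial_Pt_pos[OF K, of \<alpha> \<beta>] uE by (simp add: polar_def)
      ultimately show False using u by blast
    qed
  qed
  ultimately show ?thesis unfolding C_def by (rule negligible_subset)
qed

lemma measure_sector:
  fixes K :: "(real^3) set"
  assumes K: "compact K" "convex K" "0 \<in> interior K"
    and diff: "\<And>u. u \<noteq> 0 \<Longrightarrow> radial K differentiable (at u)"
    and ab: "0 \<le> a" "a < b" "b \<le> pi"
  shows "measure lebesgue ({u. axial_plane \<beta> u \<in> K} \<inter> sector a b) =
    integral {a..b} (\<lambda>\<alpha>. (radial K (Pt \<alpha> \<beta>))\<^sup>2) / 2"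
proof -
  let ?S = "polar (\<lambda>\<alpha>. radial K (Pt \<alpha> \<beta>)) ` box (vector [0, a]) (vector [1, b])"
  have S: "?S \<in> lmeasurable \<and> measure lebesgue ?S = integral {a..b} (\<lambda>\<alpha>. (radial K (Pt \<alpha> \<beta>))\<^sup>2) / 2"
    by (intro measure_polar_image differentiable_radial_Pt[OF diff] radial_Pt_pos[OF K] ab)
  have "measure lebesgue ({u. axial_plane \<beta> u \<in> K} \<inter> sector a b) = measure lebesgue ?S"
    using polar_image_subset_sector[OF K ab(1,3)]
      negligible_sector_diff_polar_image[OF K ab(1) less_imp_le[OF ab(2)] ab(3)]
    by (intro measure_negligible_symdiff[OF conjunct1[OF S]]) (simp add: Diff_eq_empty_iff[THEN iffD2])
  with S show ?thesis by simp
qed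

section \<open>Bisecting angles\<close>

lemma integral_pos_if_continuous_pos:
  fixes h :: "real \<Rightarrow> real"
  assumes "s < t" "continuous_on {s..t} h" "\<And>x. x \<in> {s..t} \<Longrightarrow> 0 < h x"
  shows "0 < integral {s..t} h"
proof -
  obtain x0 where x0: "x0 \<in> {s..t}" "\<And>y. y \<in> {s..t} \<Longrightarrow> h x0 \<le> h y"
    using continuous_attains_inf[OF compact_Icc _ assms(2)] assms(1) by auto
  have "integral {s..t} (\<lambda>_. h x0) \<le> integral {s..t} h"
    using x0 assms(2) by (intro integral_le integrable_continuous_real) auto
  moreover have "0 < integral {s..t} (\<lambda>_. h x0)" using assms(1,3) x0(1) by simp
  ultimately show ?thesis by linarith
qed

lemma ex1_bisection:
  fixes h :: "real \<Rightarrow> real"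
  assumes ab: "a < b" and cont: "continuous_on {a..b} h" and pos: "\<And>x. x \<in> {a..b} \<Longrightarrow> 0 < h x"
  shows "\<exists>!t. a < t \<and> t < b \<and> integral {a..t} h = integral {t..b} h"
proof -
  define I where "I t = integral {a..t} h" for t
  have int: "h integrable_on {s..t}" if "a \<le> s" "t \<le> b" for s t
    using cont that by (intro integrable_continuous_real continuous_on_subset[OF cont]) auto
  have split: "integral {t..b} h = I b - I t" if "a \<le> t" "t \<le> b" for t
    using Henstock_Kurzweil_Integration.integral_combine[OF that int[OF order_refl order_refl]] by (simp add: I_def)
  have mono: "I s < I t" if "a \<le> s" "s < t" "t \<le> b" for s t
  proof -
    have "I t = I s + integral {s..t} h"
      unfolding I_def using that by (intro Henstock_Kurzweil_Integration.integral_combine[symmetric] int) auto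
    moreover have "0 < integral {s..t} h"
      using that by (intro integral_pos_if_continuous_pos continuous_on_subset[OF cont] pos) auto
    ultimately show ?thesis by linarith
  qed
  have Ib: "0 < I b" using mono[of a b] ab by (simp add: I_def)
  have "continuous_on {a..b} (\<lambda>t. 2 * I t - I b)"
    unfolding I_def by (intro continuous_intros indefinite_integral_continuous_1 int) auto
  then obtain t where t: "a \<le> t" "t \<le> b" "2 * I t - I b = 0"
    using IVT'[of "\<lambda>t. 2 * I t - I b" a 0 b] ab Ib by (auto simp: I_def)
  then have "a < t \<and> t < b \<and> integral {a..t} h = integral {t..b} h"
    using Ib split[of t] by (cases "t = a"; cases "t = b") (auto simp: I_def)
  moreover have "s = t" if "a < s \<and> s < b \<and> integral {a..s} h = integral {s..b} h" for s
    using that t split[of s] mono[of s t] mono[of t s] by (auto simp: I_def) (smt (verit))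
  ultimately show ?thesis by blast
qed

lemma Theta_spec:
  fixes K :: "(real^3) set"
  assumes K: "compact K" "convex K" "0 \<in> interior K"
    and diff: "\<And>u. u \<noteq> 0 \<Longrightarrow> radial K differentiable (at u)"
  shows "0 < Theta K \<and> Theta K < pi \<and>
    integral {0..Theta K} (\<lambda>\<beta>. integral {0..pi} (\<lambda>\<alpha>. radial K (Pt \<alpha> \<beta>) ^ 3 * sin \<alpha>)) =
    integral {Theta K..pi} (\<lambda>\<beta>. integral {0..pi} (\<lambda>\<alpha>. radial K (Pt \<alpha> \<beta>) ^ 3 * sin \<alpha>))"
  unfolding Theta_def
proof (rule theI'[OF ex1_bisection])
  obtain e where e: "0 < e" "ball 0 e \<subseteq> K" using K(3) by (meson mem_interior)
  note cont_intros = continuous_intros continuous_on_radial_Pt[OF diff]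
  have cont: "continuous_on UNIV (\<lambda>w::real \<times> real. radial K (Pt (snd w) (fst w)) ^ 3 * sin (snd w))"
    by (intro cont_intros)
  show "continuous_on {0..pi} (\<lambda>\<beta>. integral {0..pi} (\<lambda>\<alpha>. radial K (Pt \<alpha> \<beta>) ^ 3 * sin \<alpha>))"
    using integral_continuous_on_param[of "{0..pi}" 0 pi "\<lambda>\<beta> \<alpha>. radial K (Pt \<alpha> \<beta>) ^ 3 * sin \<alpha>"]
      continuous_on_subset[OF cont]
    by (simp add: split_beta)
  fix \<beta> :: real
  have "integral {0..pi} (\<lambda>\<alpha>. (e / 2) ^ 3 * sin \<alpha>) \<le> integral {0..pi} (\<lambda>\<alpha>. radial K (Pt \<alpha> \<beta>) ^ 3 * sin \<alpha>)"
  proof (rule integral_le)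
    show "(\<lambda>\<alpha>. radial K (Pt \<alpha> \<beta>) ^ 3 * sin \<alpha>) integrable_on {0..pi}"
      by (intro integrable_continuous_real cont_intros)
    fix \<alpha> assume "\<alpha> \<in> {0..pi}"
    then have "0 \<le> sin \<alpha>" by (auto intro: sin_ge_zero)
    moreover have "e / 2 \<le> radial K (Pt \<alpha> \<beta>)"
      using radial_ge_if_ball_subset[OF K(1,2) e Pt_neq_0] by simp
    ultimately show "(e / 2) ^ 3 * sin \<alpha> \<le> radial K (Pt \<alpha> \<beta>) ^ 3 * sin \<alpha>"
      using e(1) by (intro mult_right_mono power_mono) auto
  qed (intro integrable_continuous_real continuous_intros)
  moreover have "0 < integral {0..pi} (\<lambda>\<alpha>. (e / 2) ^ 3 * sin \<alpha>)" using e(1) by simp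
  ultimately show "0 < integral {0..pi} (\<lambda>\<alpha>. radial K (Pt \<alpha> \<beta>) ^ 3 * sin \<alpha>)" by linarith
qed simp

lemma ex1_bisection_radial_Pt:
  fixes K :: "(real^3) set"
  assumes K: "compact K" "convex K" "0 \<in> interior K"
    and diff: "\<And>u. u \<noteq> 0 \<Longrightarrow> radial K differentiable (at u)"
  shows "\<exists>!\<phi>. 0 < \<phi> \<and> \<phi> < pi \<and>
    integral {0..\<phi>} (\<lambda>\<alpha>. (radial K (Pt \<alpha> \<beta>))\<^sup>2) = integral {\<phi>..pi} (\<lambda>\<alpha>. (radial K (Pt \<alpha> \<beta>))\<^sup>2)"
proof (rule ex1_bisection)
  show "continuous_on {0..pi} (\<lambda>\<alpha>. (radial K (Pt \<alpha> \<beta>))\<^sup>2)"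
    by (intro continuous_intros continuous_on_radial_Pt[OF diff])
  show "0 < (radial K (Pt \<alpha> \<beta>))\<^sup>2" for \<alpha>
    using radial_Pt_pos[OF K, of \<alpha> \<beta>] by simp
qed simp

lemma Phi_spec:
  fixes K :: "(real^3) set"
  assumes "compact K" "convex K" "0 \<in> interior K" "\<And>u. u \<noteq> 0 \<Longrightarrow> radial K differentiable (at u)"
  shows "0 < Phi K \<and> Phi K < pi \<and>
    integral {0..Phi K} (\<lambda>\<alpha>. (radial K (Pt \<alpha> 0))\<^sup>2) = integral {Phi K..pi} (\<lambda>\<alpha>. (radial K (Pt \<alpha> 0))\<^sup>2)"
  unfolding Phi_def by (rule theI'[OF ex1_bisection_radial_Pt[OF assms]])

lemma Psi_spec:
  fixes K :: "(real^3) set"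
  assumes "compact K" "convex K" "0 \<in> interior K" "\<And>u. u \<noteq> 0 \<Longrightarrow> radial K differentiable (at u)"
  shows "0 < Psi K \<and> Psi K < pi \<and>
    integral {0..Psi K} (\<lambda>\<alpha>. (radial K (Pt \<alpha> (Theta K)))\<^sup>2)
      = integral {Psi K..pi} (\<lambda>\<alpha>. (radial K (Pt \<alpha> (Theta K)))\<^sup>2)"
  unfolding Psi_def by (rule theI'[OF ex1_bisection_radial_Pt[OF assms]])

lemma measure_wedge_halves:
  fixes K :: "(real^3) set"
  assumes K: "compact K" "convex K" "0 \<in> interior K"
    and diff: "\<And>u. u \<noteq> 0 \<Longrightarrow> radial K differentiable (at u)"
  shows "measure lebesgue (K \<inter> wedge 0 (Theta K)) = measure lebesgue (K \<inter> wedge (Theta K) pi)"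
proof -
  have \<theta>: "0 < Theta K" "Theta K < pi" using Theta_spec[OF K diff] by auto
  have "measure lebesgue (K \<inter> wedge 0 (Theta K)) =
      integral {0..Theta K} (\<lambda>\<beta>. integral {0..pi} (\<lambda>\<alpha>. radial K (Pt \<alpha> \<beta>) ^ 3 * sin \<alpha>)) / 3"
    using \<theta> by (intro measure_wedge[OF K diff]) auto
  also have "\<dots> = integral {Theta K..pi} (\<lambda>\<beta>. integral {0..pi} (\<lambda>\<alpha>. radial K (Pt \<alpha> \<beta>) ^ 3 * sin \<alpha>)) / 3"
    using Theta_spec[OF K diff] by simp
  also have "\<dots> = measure lebesgue (K \<inter> wedge (Theta K) pi)"
    using \<theta> by (intro measure_wedge[OF K diff, symmetric]) auto
  finally show ?thesis .
qed

lemma measure_sector_halves: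
  fixes K :: "(real^3) set"
  assumes K: "compact K" "convex K" "0 \<in> interior K"
    and diff: "\<And>u. u \<noteq> 0 \<Longrightarrow> radial K differentiable (at u)"
    and \<psi>: "0 < \<psi> \<and> \<psi> < pi \<and>
      integral {0..\<psi>} (\<lambda>\<alpha>. (radial K (Pt \<alpha> \<beta>))\<^sup>2) = integral {\<psi>..pi} (\<lambda>\<alpha>. (radial K (Pt \<alpha> \<beta>))\<^sup>2)"
  shows "measure lebesgue ({u. axial_plane \<beta> u \<in> K} \<inter> sector 0 \<psi>) =
    measure lebesgue ({u. axial_plane \<beta> u \<in> K} \<inter> sector \<psi> pi)"
proof -
  have "measure lebesgue ({u. axial_plane \<beta> u \<in> K} \<inter> sector 0 \<psi>) =
      integral {0..\<psi>} (\<lambda>\<alpha>. (radial K (Pt \<alpha> \<beta>))\<^sup>2) / 2"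
    using \<psi> by (intro measure_sector[OF K diff]) auto
  also have "\<dots> = integral {\<psi>..pi} (\<lambda>\<alpha>. (radial K (Pt \<alpha> \<beta>))\<^sup>2) / 2" using \<psi> by simp
  also have "\<dots> = measure lebesgue ({u. axial_plane \<beta> u \<in> K} \<inter> sector \<psi> pi)"
    using \<psi> by (intro measure_sector[OF K diff, symmetric]) auto
  finally show ?thesis .
qed

section \<open>Quadrants of the normalised body\<close>

lemma matrix_inv_mult:
  fixes M :: "'a::semiring_1^'n::finite^'n"
  assumes "invertible M"
  shows "M ** matrix_inv M = mat 1" "matrix_inv M ** M = mat 1"
  using someI_ex[OF assms[unfolded invertible_def]] by (simp_all add: matrix_inv_def)

lemma image_matrix_inv:
  fixes M :: "'a::comm_ring_1^'n::finite^'n"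
  assumes "invertible M"
  shows "(\<lambda>p. matrix_inv M *v p) ` S = {p. M *v p \<in> S}"
  using matrix_inv_mult[OF assms]
  by (force simp: matrix_vector_mul_assoc image_iff intro: exI[of _ "M *v _"])

lemma measure_matrix_vimage:
  fixes M :: "real^'n::{finite,wellorder}^'n::{finite,wellorder}"
  assumes "invertible M" "S \<in> lmeasurable"
  shows "{p. M *v p \<in> S} \<in> lmeasurable"
    and "measure lebesgue {p. M *v p \<in> S} = measure lebesgue S / \<bar>det M\<bar>"
proof -
  show "{p. M *v p \<in> S} \<in> lmeasurable"
    using measurable_linear_image[OF matrix_vector_mul_linear assms(2), of "matrix_inv M"]
    by (simp add: image_matrix_inv[OF assms(1)])
  have "det M * det (matrix_inv M) = 1"
    using matrix_inv_mult(1)[OF assms(1)] by (metis det_I det_mul)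
  then have "\<bar>det M\<bar> * \<bar>det (matrix_inv M)\<bar> = 1" by (metis abs_1 abs_mult)
  then have "\<bar>det (matrix_inv M)\<bar> = 1 / \<bar>det M\<bar>"
    by (metis mult.commute mult_zero_left nonzero_eq_divide_eq zero_neq_one)
  then show "measure lebesgue {p. M *v p \<in> S} = measure lebesgue S / \<bar>det M\<bar>"
    using measure_linear_image[OF matrix_vector_mul_linear assms(2), of "matrix_inv M"]
    by (simp add: image_matrix_inv[OF assms(1)])
qed

lemma measure_halfspaces_split:
  fixes S :: "(real^'n) set"
  assumes "S \<in> lmeasurable"
  shows "measure lebesgue (S \<inter> {p. 0 \<le> p$i}) + measure lebesgue (S \<inter> {p. p$i \<le> 0}) = measure lebesgue S"
proof -
  have "closed {p::real^'n. 0 \<le> p$i}" "closed {p::real^'n. p$i \<le> 0}"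
    by (auto intro!: closed_Collect_le continuous_intros)
  then have meas: "S \<inter> {p. 0 \<le> p$i} \<in> lmeasurable" "S \<inter> {p. p$i \<le> 0} \<in> lmeasurable"
    using assms by (auto intro: fmeasurable_Int_fmeasurable borel_closed)
  have "negligible {p::real^'n. axis i 1 \<bullet> p = 0}" by (rule negligible_hyperplane) simp
  then have "negligible (S \<inter> {p. 0 \<le> p$i} \<inter> (S \<inter> {p. p$i \<le> 0}))"
    by (rule negligible_subset) (auto simp: inner_axis')
  moreover have "S \<inter> {p. 0 \<le> p$i} \<union> S \<inter> {p. p$i \<le> 0} = S" by auto
  ultimately show ?thesis
    using measure_Un3[OF meas] negligible_imp_measure0 by simp
qed

lemma cot_mult_sin: "sin x \<noteq> 0 \<Longrightarrow> cot x * sin x = cos x"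
  by (simp add: cot_def)

lemma inverse_tan_mult_sin: "sin x \<noteq> 0 \<Longrightarrow> 1 / (s * tan x) * sin x = cos x / s"
  by (cases "cos x = 0") (simp_all add: tan_def)

definition frame_matrix :: "real \<Rightarrow> real \<Rightarrow> real \<Rightarrow> real^3^3" where
  "frame_matrix \<theta> \<phi> \<psi> =
     vector [vector [1, cot \<phi>, 1 / (sin \<theta> * tan \<psi>)], vector [0, 1, cot \<theta>], vector [0, 0, 1]]"

lemma Amat_eq_matrix_inv_frame_matrix: "Amat K = matrix_inv (frame_matrix (Theta K) (Phi K) (Psi K))"
  by (simp add: Amat_def frame_matrix_def)

lemma frame_matrix_mult:
  "frame_matrix \<theta> \<phi> \<psi> *v p =
     vector [p$1 + cot \<phi> * p$2 + 1 / (sin \<theta> * tan \<psi>) * p$3, p$2 + cot \<theta> * p$3, p$3]"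
  by (simp add: frame_matrix_def matrix_vector_mult_def sum_3 vec_eq_iff forall_3)

lemma det_frame_matrix: "det (frame_matrix \<theta> \<phi> \<psi>) = 1"
  by (simp add: frame_matrix_def det_3)

lemma invertible_frame_matrix: "invertible (frame_matrix \<theta> \<phi> \<psi>)"
  by (simp add: invertible_det_nz det_frame_matrix)

lemma measure_Deltas_eq_wedges:
  fixes K :: "(real^3) set" and \<theta> \<phi> \<psi> :: real
  assumes K: "compact K" and \<theta>: "0 < sin \<theta>"
  defines "L \<equiv> {p. frame_matrix \<theta> \<phi> \<psi> *v p \<in> K}"
  shows "measure lebesgue (Delta1 L) + measure lebesgue (Delta2 L) = measure lebesgue (K \<inter> wedge 0 \<theta>)"
    and "measure lebesgue (Delta4 L) + measure lebesgue (Delta3 L) = measure lebesgue (K \<inter> wedge \<theta> pi)"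
proof -
  let ?M = "frame_matrix \<theta> \<phi> \<psi>"
  have key: "sin \<theta> * (p$2 + cot \<theta> * p$3) = sin \<theta> * p$2 + cos \<theta> * p$3" for p :: "real^3"
    using cot_mult_sin[of \<theta>] \<theta> by (simp add: algebra_simps)
  have eqs: "L \<inter> {p. 0 \<le> p$2 \<and> 0 \<le> p$3} = {p. ?M *v p \<in> K \<inter> wedge 0 \<theta>}"
    "L \<inter> {p. p$2 \<le> 0 \<and> 0 \<le> p$3} = {p. ?M *v p \<in> K \<inter> wedge \<theta> pi}"
    using \<theta> by (auto simp: L_def wedge_def frame_matrix_mult key zero_le_mult_iff mult_le_0_iff)
  have meas: "K \<inter> wedge a b \<in> lmeasurable" for a b
    by (intro lmeasurable_compact compact_Int_closed K closed_wedge)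
  have "{p. ?M *v p \<in> K \<inter> wedge a b} \<in> lmeasurable"
    "measure lebesgue {p. ?M *v p \<in> K \<inter> wedge a b} = measure lebesgue (K \<inter> wedge a b)" for a b
    using measure_matrix_vimage[OF invertible_frame_matrix meas] by (simp_all add: det_frame_matrix)
  note vim = this
  have "Delta1 L = L \<inter> {p. 0 \<le> p$2 \<and> 0 \<le> p$3} \<inter> {p. 0 \<le> p$1}"
    "Delta2 L = L \<inter> {p. 0 \<le> p$2 \<and> 0 \<le> p$3} \<inter> {p. p$1 \<le> 0}"
    "Delta4 L = L \<inter> {p. p$2 \<le> 0 \<and> 0 \<le> p$3} \<inter> {p. 0 \<le> p$1}"
    "Delta3 L = L \<inter> {p. p$2 \<le> 0 \<and> 0 \<le> p$3} \<inter> {p. p$1 \<le> 0}"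
    by (auto simp: Delta1_def Delta2_def Delta3_def Delta4_def)
  then show "measure lebesgue (Delta1 L) + measure lebesgue (Delta2 L) = measure lebesgue (K \<inter> wedge 0 \<theta>)"
    "measure lebesgue (Delta4 L) + measure lebesgue (Delta3 L) = measure lebesgue (K \<inter> wedge \<theta> pi)"
    using measure_halfspaces_split[OF vim(1)[of 0 \<theta>, folded eqs(1)]] vim(2)[of 0 \<theta>, folded eqs(1)]
      measure_halfspaces_split[OF vim(1)[of \<theta> pi, folded eqs(2)]] vim(2)[of \<theta> pi, folded eqs(2)]
    by simp_all
qed

lemma area_z0_slices_eq_sectors:
  fixes K :: "(real^3) set" and \<theta> \<phi> \<psi> :: real
  assumes K: "compact K" and \<phi>: "0 < sin \<phi>"
  defines "L \<equiv> {p. frame_matrix \<theta> \<phi> \<psi> *v p \<in> K}"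
  shows "area_z0 (L \<inter> {p. p$3 = 0 \<and> p$1 \<ge> 0 \<and> p$2 \<ge> 0})
      = measure lebesgue ({u. axial_plane 0 u \<in> K} \<inter> sector 0 \<phi>)"
    and "area_z0 (L \<inter> {p. p$3 = 0 \<and> p$1 \<le> 0 \<and> p$2 \<ge> 0})
      = measure lebesgue ({u. axial_plane 0 u \<in> K} \<inter> sector \<phi> pi)"
proof -
  define N where "N = (vector [vector [1, cot \<phi>], vector [0, 1]] :: real^2^2)"
  have Nv: "N *v q = vector [q$1 + cot \<phi> * q$2, q$2]" for q
    by (simp add: N_def matrix_vector_mult_def sum_2 vec_eq_iff forall_2)
  have N: "invertible N" "det N = 1" by (simp_all add: N_def det_2 invertible_det_nz)
  have M: "frame_matrix \<theta> \<phi> \<psi> *v vector [q$1, q$2, 0] = axial_plane 0 (N *v q)" for q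
    by (simp add: frame_matrix_mult axial_plane_def Nv)
  have key: "sin \<phi> * (x + cot \<phi> * y) = sin \<phi> * x + cos \<phi> * y" for x y
    using cot_mult_sin[of \<phi>] \<phi> by (simp add: algebra_simps)
  have "{q. vector [q$1, q$2, 0] \<in> L \<inter> {p. p$3 = 0 \<and> p$1 \<ge> 0 \<and> p$2 \<ge> 0}}
      = {q. N *v q \<in> {u. axial_plane 0 u \<in> K} \<inter> sector 0 \<phi>}"
    "{q. vector [q$1, q$2, 0] \<in> L \<inter> {p. p$3 = 0 \<and> p$1 \<le> 0 \<and> p$2 \<ge> 0}}
      = {q. N *v q \<in> {u. axial_plane 0 u \<in> K} \<inter> sector \<phi> pi}"
    using \<phi> by (auto simp: L_def M sector_def Nv key zero_le_mult_iff mult_le_0_iff)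
  then show "area_z0 (L \<inter> {p. p$3 = 0 \<and> p$1 \<ge> 0 \<and> p$2 \<ge> 0})
      = measure lebesgue ({u. axial_plane 0 u \<in> K} \<inter> sector 0 \<phi>)"
    "area_z0 (L \<inter> {p. p$3 = 0 \<and> p$1 \<le> 0 \<and> p$2 \<ge> 0})
      = measure lebesgue ({u. axial_plane 0 u \<in> K} \<inter> sector \<phi> pi)"
    unfolding area_z0_def
    using measure_matrix_vimage(2)[OF N(1) lmeasurable_axial_slice_sector[OF K]] N(2) by simp_all
qed

lemma area_y0_slices_eq_sectors:
  fixes K :: "(real^3) set" and \<theta> \<phi> \<psi> :: real
  assumes K: "compact K" and sym: "\<And>x. x \<in> K \<Longrightarrow> - x \<in> K"
    and \<theta>: "0 < sin \<theta>" and \<psi>: "0 < sin \<psi>"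
  defines "L \<equiv> {p. frame_matrix \<theta> \<phi> \<psi> *v p \<in> K}"
  shows "area_y0 (L \<inter> {p. p$2 = 0 \<and> p$1 \<ge> 0 \<and> p$3 \<ge> 0})
      = sin \<theta> * measure lebesgue ({u. axial_plane \<theta> u \<in> K} \<inter> sector 0 \<psi>)"
    and "area_y0 (L \<inter> {p. p$2 = 0 \<and> p$1 \<ge> 0 \<and> p$3 \<le> 0})
      = sin \<theta> * measure lebesgue ({u. axial_plane \<theta> u \<in> K} \<inter> sector \<psi> pi)"
proof -
  define c where "c = 1 / (sin \<theta> * tan \<psi>)"
  define N where "N = (vector [vector [1, c], vector [0, 1 / sin \<theta>]] :: real^2^2)"
  define N' where "N' = (vector [vector [-1, - c], vector [0, - 1 / sin \<theta>]] :: real^2^2)"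
  have Nv: "N *v q = vector [q$1 + c * q$2, q$2 / sin \<theta>]"
    "N' *v q = vector [- q$1 - c * q$2, - (q$2 / sin \<theta>)]" for q
    by (simp_all add: N_def N'_def matrix_vector_mult_def sum_2 vec_eq_iff forall_2)
  have N: "invertible N" "invertible N'" "det N = 1 / sin \<theta>" "det N' = 1 / sin \<theta>"
    using \<theta> by (simp_all add: N_def N'_def det_2 invertible_det_nz)
  have M: "frame_matrix \<theta> \<phi> \<psi> *v vector [q$1, 0, q$2] = axial_plane \<theta> (N *v q)" for q
    using cot_mult_sin[of \<theta>] \<theta>
    by (simp add: frame_matrix_mult axial_plane_def Nv c_def vec_eq_iff forall_3 field_simps)
  have "axial_plane \<theta> (N' *v q) = - axial_plane \<theta> (N *v q)" for q
    by (simp add: Nv axial_plane_def vec_eq_iff forall_3)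
  \<comment> \<open>the half \<open>z \<le> 0\<close> of the slice is reflected to \<open>z \<ge> 0\<close> using the central symmetry of \<open>K\<close>\<close>
  then have M': "axial_plane \<theta> (N' *v q) \<in> K \<longleftrightarrow> axial_plane \<theta> (N *v q) \<in> K" for q
    by (metis minus_minus sym)
  have "c * sin \<psi> = cos \<psi> / sin \<theta>" using inverse_tan_mult_sin[of \<psi> "sin \<theta>"] \<psi> by (simp add: c_def)
  moreover have "sin \<psi> * (x + c * y) = sin \<psi> * x + (c * sin \<psi>) * y" for x y
    by (simp add: algebra_simps)
  ultimately have key1: "sin \<psi> * (x + c * y) = sin \<psi> * x + cos \<psi> * (y / sin \<theta>)" for x y
    by simp
  have "sin \<psi> * (- x - c * y) = - (sin \<psi> * (x + c * y))" for x y by (simp add: algebra_simps)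
  then have key2: "sin \<psi> * (- x - c * y) = - (sin \<psi> * x) - cos \<psi> * (y / sin \<theta>)" for x y
    unfolding key1 by simp
  have "{q. vector [q$1, 0, q$2] \<in> L \<inter> {p. p$2 = 0 \<and> p$1 \<ge> 0 \<and> p$3 \<ge> 0}}
      = {q. N *v q \<in> {u. axial_plane \<theta> u \<in> K} \<inter> sector 0 \<psi>}"
    "{q. vector [q$1, 0, q$2] \<in> L \<inter> {p. p$2 = 0 \<and> p$1 \<ge> 0 \<and> p$3 \<le> 0}}
      = {q. N' *v q \<in> {u. axial_plane \<theta> u \<in> K} \<inter> sector \<psi> pi}"
    using \<theta> \<psi> M' by (auto simp: L_def M sector_def Nv key1 key2 zero_le_mult_iff mult_le_0_iff
      zero_le_divide_iff divide_le_0_iff)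
  then show "area_y0 (L \<inter> {p. p$2 = 0 \<and> p$1 \<ge> 0 \<and> p$3 \<ge> 0})
      = sin \<theta> * measure lebesgue ({u. axial_plane \<theta> u \<in> K} \<inter> sector 0 \<psi>)"
    "area_y0 (L \<inter> {p. p$2 = 0 \<and> p$1 \<ge> 0 \<and> p$3 \<le> 0})
      = sin \<theta> * measure lebesgue ({u. axial_plane \<theta> u \<in> K} \<inter> sector \<psi> pi)"
    unfolding area_y0_def
    using measure_matrix_vimage(2)[OF N(1) lmeasurable_axial_slice_sector[OF K]]
      measure_matrix_vimage(2)[OF N(2) lmeasurable_axial_slice_sector[OF K]] N(3,4) \<theta>
    by simp_all
qed

theorem proposition5p2:
  fixes K L :: "(real^3) set"
  assumes "K \<in> Khat"
    and "L = (\<lambda>p. Amat K *v p) ` K"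
  shows "area_y0 (L \<inter> {p. p$2 = 0 \<and> p$1 \<ge> 0 \<and> p$3 \<ge> 0})
           = area_y0 (L \<inter> {p. p$2 = 0 \<and> p$1 \<ge> 0 \<and> p$3 \<le> 0}) \<and>
         area_z0 (L \<inter> {p. p$3 = 0 \<and> p$1 \<ge> 0 \<and> p$2 \<ge> 0})
           = area_z0 (L \<inter> {p. p$3 = 0 \<and> p$1 \<le> 0 \<and> p$2 \<ge> 0}) \<and>
         measure lebesgue (Delta1 L) + measure lebesgue (Delta2 L)
           = measure lebesgue (Delta3 L) + measure lebesgue (Delta4 L)"
proof -
  note K = KhatD(1-3)[OF assms(1)] and sym = KhatD(4)[OF assms(1)] and diff = KhatD(5)[OF assms(1)]
  have \<theta>: "0 < sin (Theta K)" using Theta_spec[OF K diff] by (simp add: sin_gt_zero)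
  have \<phi>: "0 < sin (Phi K)" using Phi_spec[OF K diff] by (simp add: sin_gt_zero)
  have \<psi>: "0 < sin (Psi K)" using Psi_spec[OF K diff] by (simp add: sin_gt_zero)
  have L: "L = {p. frame_matrix (Theta K) (Phi K) (Psi K) *v p \<in> K}"
    unfolding assms(2) Amat_eq_matrix_inv_frame_matrix by (rule image_matrix_inv[OF invertible_frame_matrix])
  show ?thesis
    unfolding L
    using area_y0_slices_eq_sectors[OF K(1) sym \<theta> \<psi>, where \<phi> = "Phi K"]
      measure_sector_halves[OF K diff Psi_spec[OF K diff]]
      area_z0_slices_eq_sectors[OF K(1) \<phi>, where \<theta> = "Theta K" and \<psi> = "Psi K"]
      measure_sector_halves[OF K diff Phi_spec[OF K diff]]
      measure_Deltas_eq_wedges[OF K(1) \<theta>, where \<phi> = "Phi K" and \<psi> = "Psi K"]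
      measure_wedge_halves[OF K diff]
    by (simp add: add.commute)
qed

end
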